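(* Assume that the set $\mathcal F$ of function symbols is a finite set of constants (so the Herbrand universe is finite), that the standing assumptions on constraints below hold, and that for every closed constraint $C$ it is decidable whether $\mathcal T\models C$. Then there exists an algorithm which, given a hybrid program $(P,\mathcal T)$ and a ground rule atom $A$, decides whether $(P,\mathcal T)\models_{\mathrm{wf}} A$ and whether $(P,\mathcal T)\models_{\mathrm{wf}}\neg A$.
   Context: Fix a first-order alphabet: a set $\mathcal F$ of function symbols containing at least one constant, a set of variables, and a set of predicate symbols partitioned into rule predicates $\mathcal P_R$ and constraint predicates $\mathcal P_C$. An external theory $\mathcal T$ is a set of first-order axioms over $\mathcal P_C$ and $\mathcal F$, with the standard 2-valued semantics (arbitrary, not necessarily Herbrand, models). A designated set of formulas over $\mathcal P_C,\mathcal F$ are called constraints; the constant $\mathbf{true}$ is a constraint. Standing assumptions on constraints: $=$ is a constraint predicate and $\mathcal T$ contains Clark's equality theory (equality axioms, $f(\bar x)=f(\bar y)\to\bar x=\bar y$, $f(\bar x)\neq g(\bar y)$ for distinct $f,g$, $x\neq t$ for non-variable $t$ containing $x$, and the weak domain closure axiom $\bigvee_{f\in\mathcal F}\exists\bar y\,(x=f(\bar y))$ when $\mathcal F$ is finite); equalities between terms are constraints, and the set of constraints is closed under $\wedge,\vee,\neg,\exists$. Rule atoms/literals are atoms/literals whose predicate is in $\mathcal P_R$. A hybrid rule is $H\leftarrow C,L_1,\dots,L_n$ ($n\ge 0$) with $H$ a rule atom, $L_i$ rule literals and $C$ a constraint (the constraint of the rule). A hybrid program is a pair $(P,\mathcal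 T)$ with $P$ a finite set of hybrid rules. The Herbrand base $\mathcal H$ is the set of ground rule atoms over $\mathcal F$. A ground instance of a rule is obtained by a substitution $\theta$ mapping all free variables of the rule to ground terms (bound variables of $C$ renamed apart as needed). For a model $M_0$ of $\mathcal T$, $P/M_0$ is the ground normal logic program consisting of all rules $H\theta\leftarrow L_1\theta,\dots,L_n\theta$ such that $H\theta\leftarrow C\theta,L_1\theta,\dots,L_n\theta$ is a ground instance of a rule of $P$ and $M_0\models C\theta$. The well-founded model $WF(Q)$ of a ground normal program $Q$ is the least fixpoint of the monotone operator $\Psi_Q(I)=(\mathcal M_{Q/_tI}\cap\mathcal H)\cup\neg(\mathcal H\setminus\mathcal M_{Q/_{tu}I})$ on sets $I\subseteq\mathcal H\cup\neg\mathcal H$ containing no complementary pair, where $\neg p$ is treated as a fresh predicate so that $Q$ is definite, $Q/_tI=Q\cup\{\neg A\mid\neg A\in I\}$, $Q/_{tu}I=Q\cup\{\neg A\mid A\in\mathcal H,A\notin I\}$, and $\mathcal M_R$ is the least Herbrand model of a definite program $R$ over $\mathcal H\cup\neg\mathcal H$. Such $I$ is a 3-valued interpretation: a ground literal is true if it is in $I$, false if its complement is in $I$, undefined otherwise, extended to formulas by Kleene 3-valued logic ($\models_3$). A formula $F$ over $\mathcal P_R,\mathcal F$ holds in the well-founded semantics, $(P,\mathcal T)\models_{\mathrm{wf}}F$, iff $WF(P/M_0)\models_3 F$ for every model $M_0$ of $\mathcal T$. *)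

theory Defs
  imports Main "HOL-Library.Nat_Bijection"
begin

datatype recf = Zero | Succ | Proj nat | Comp recf "recf list" | PrimRec recf recf | Mu recf

inductive recf_eval :: "recf \<Rightarrow> nat list \<Rightarrow> nat \<Rightarrow> bool" where
  zero: "recf_eval Zero xs 0"
| succ: "recf_eval Succ (x # xs) (Suc x)"
| proj: "n < length xs \<Longrightarrow> recf_eval (Proj n) xs (xs ! n)"
| comp: "length gs = length ys \<Longrightarrow> (\<forall>i<length gs. recf_eval (gs ! i) xs (ys ! i))
         \<Longrightarrow> recf_eval f ys z \<Longrightarrow> recf_eval (Comp f gs) xs z"
| prim0: "recf_eval f xs y \<Longrightarrow> recf_eval (PrimRec f g) (0 # xs) y"
| primS: "recf_eval (PrimRec f g) (n # xs) y \<Longrightarrow> recf_eval g (y # n # xs) z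
         \<Longrightarrow> recf_eval (PrimRec f g) (Suc n # xs) z"
| mu: "recf_eval f (n # xs) 0 \<Longrightarrow> (\<forall>m<n. \<exists>k. recf_eval f (m # xs) (Suc k))
         \<Longrightarrow> recf_eval (Mu f) xs n"

definition decidable_on :: "nat set \<Rightarrow> nat set \<Rightarrow> bool" where
  "decidable_on D S \<longleftrightarrow> (\<exists>f. \<forall>n\<in>D. recf_eval f [n] (if n \<in> S then 1 else 0))"

text \<open>Function symbols are constants (natural numbers), variables are natural numbers.\<close>
datatype trm = V nat | C nat

datatype fm = Tru | Eq trm trm | Atm nat "trm list" | Neg fm | Conj fm fm | Disj fm fm | Ex nat fm

datatype ratom = RA nat "trm list"
datatype lit = Pos ratom | NegL ratom

text \<open>A hybrid rule H <- C, L1, ..., Ln is a triple (H, C, [L1,...,Ln]); a program is a list of rules.\<close>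
type_synonym hrule = "ratom \<times> fm \<times> lit list"
type_synonym hprog = "hrule list"

fun trm_consts :: "trm \<Rightarrow> nat set" where
  "trm_consts (V x) = {}" | "trm_consts (C c) = {c}"

fun fm_consts :: "fm \<Rightarrow> nat set" where
  "fm_consts Tru = {}"
| "fm_consts (Eq s t) = trm_consts s \<union> trm_consts t"
| "fm_consts (Atm p ts) = (\<Union>t\<in>set ts. trm_consts t)"
| "fm_consts (Neg f) = fm_consts f"
| "fm_consts (Conj f g) = fm_consts f \<union> fm_consts g"
| "fm_consts (Disj f g) = fm_consts f \<union> fm_consts g"
| "fm_consts (Ex x f) = fm_consts f"

fun trm_vars :: "trm \<Rightarrow> nat set" where
  "trm_vars (V x) = {x}" | "trm_vars (C c) = {}"

fun fm_free :: "fm \<Rightarrow> nat set" where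
  "fm_free Tru = {}"
| "fm_free (Eq s t) = trm_vars s \<union> trm_vars t"
| "fm_free (Atm p ts) = (\<Union>t\<in>set ts. trm_vars t)"
| "fm_free (Neg f) = fm_free f"
| "fm_free (Conj f g) = fm_free f \<union> fm_free g"
| "fm_free (Disj f g) = fm_free f \<union> fm_free g"
| "fm_free (Ex x f) = fm_free f - {x}"

fun ratom_consts :: "ratom \<Rightarrow> nat set" where
  "ratom_consts (RA p ts) = (\<Union>t\<in>set ts. trm_consts t)"

fun lit_atom :: "lit \<Rightarrow> ratom" where
  "lit_atom (Pos a) = a" | "lit_atom (NegL a) = a"

definition rule_consts :: "hrule \<Rightarrow> nat set" where
  "rule_consts r = (case r of (h, c, b) \<Rightarrow>
     ratom_consts h \<union> fm_consts c \<union> (\<Union>l\<in>set b. ratom_consts (lit_atom l)))"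

definition ground_ratom :: "nat set \<Rightarrow> ratom \<Rightarrow> bool" where
  "ground_ratom F a \<longleftrightarrow> (case a of RA p ts \<Rightarrow> \<forall>t\<in>set ts. \<exists>c\<in>F. t = C c)"

definition herbrand_base :: "nat set \<Rightarrow> ratom set" where
  "herbrand_base F = {a. ground_ratom F a}"

fun trm_subst :: "(nat \<Rightarrow> trm) \<Rightarrow> trm \<Rightarrow> trm" where
  "trm_subst \<sigma> (V x) = \<sigma> x" | "trm_subst \<sigma> (C c) = C c"

text \<open>Substitution of free variables; bound variables are left untouched (the substituted
  terms are ground, so no capture can occur).\<close>
fun fm_subst :: "(nat \<Rightarrow> trm) \<Rightarrow> fm \<Rightarrow> fm" where
  "fm_subst \<sigma> Tru = Tru"
| "fm_subst \<sigma> (Eq s t) = Eq (trm_subst \<sigma> s) (trm_subst \<sigma> t)"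
| "fm_subst \<sigma> (Atm p ts) = Atm p (map (trm_subst \<sigma>) ts)"
| "fm_subst \<sigma> (Neg f) = Neg (fm_subst \<sigma> f)"
| "fm_subst \<sigma> (Conj f g) = Conj (fm_subst \<sigma> f) (fm_subst \<sigma> g)"
| "fm_subst \<sigma> (Disj f g) = Disj (fm_subst \<sigma> f) (fm_subst \<sigma> g)"
| "fm_subst \<sigma> (Ex x f) = Ex x (fm_subst (\<sigma>(x := V x)) f)"

fun ratom_subst :: "(nat \<Rightarrow> trm) \<Rightarrow> ratom \<Rightarrow> ratom" where
  "ratom_subst \<sigma> (RA p ts) = RA p (map (trm_subst \<sigma>) ts)"

fun lit_subst :: "(nat \<Rightarrow> trm) \<Rightarrow> lit \<Rightarrow> lit" where
  "lit_subst \<sigma> (Pos a) = Pos (ratom_subst \<sigma> a)"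
| "lit_subst \<sigma> (NegL a) = NegL (ratom_subst \<sigma> a)"

text \<open>A structure: interpretation of constants and of constraint predicates; = is identity.\<close>
type_synonym 'd struct = "(nat \<Rightarrow> 'd) \<times> (nat \<Rightarrow> 'd list \<Rightarrow> bool)"

fun trm_val :: "'d struct \<Rightarrow> (nat \<Rightarrow> 'd) \<Rightarrow> trm \<Rightarrow> 'd" where
  "trm_val M va (V x) = va x" | "trm_val M va (C c) = fst M c"

fun sat :: "'d struct \<Rightarrow> (nat \<Rightarrow> 'd) \<Rightarrow> fm \<Rightarrow> bool" where
  "sat M va Tru = True"
| "sat M va (Eq s t) = (trm_val M va s = trm_val M va t)"
| "sat M va (Atm p ts) = snd M p (map (trm_val M va) ts)"
| "sat M va (Neg f) = (\<not> sat M va f)"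
| "sat M va (Conj f g) = (sat M va f \<and> sat M va g)"
| "sat M va (Disj f g) = (sat M va f \<or> sat M va g)"
| "sat M va (Ex x f) = (\<exists>d. sat M (va(x := d)) f)"

definition holds :: "'d struct \<Rightarrow> fm \<Rightarrow> bool" where
  "holds M f \<longleftrightarrow> (\<forall>va. sat M va f)"

definition is_model :: "fm set \<Rightarrow> 'd struct \<Rightarrow> bool" where
  "is_model T M \<longleftrightarrow> (\<forall>f\<in>T. holds M f)"

definition entails :: "'d itself \<Rightarrow> fm set \<Rightarrow> fm \<Rightarrow> bool" where
  "entails _ T f \<longleftrightarrow> (\<forall>M :: 'd struct. is_model T M \<longrightarrow> holds M f)"

text \<open>Weak domain closure axiom for a finite set of constants listed by cs:
  forall x. x = c1 \<or> ... \<or> x = cn.\<close>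
definition dca :: "nat \<Rightarrow> nat list \<Rightarrow> fm" where
  "dca x cs = Neg (Ex x (Neg (foldr (\<lambda>c g. Disj (Eq (V x) (C c)) g) cs (Neg Tru))))"

type_synonym gprog = "(ratom \<times> lit list) set"

text \<open>Least Herbrand model of a definite program over H \<union> \<not>H (negative literals
  treated as fresh atoms).\<close>
definition least_model :: "(lit \<times> lit list) set \<Rightarrow> lit set" where
  "least_model R = \<Inter>{S. \<forall>h b. (h, b) \<in> R \<longrightarrow> set b \<subseteq> S \<longrightarrow> h \<in> S}"

definition prog_t :: "gprog \<Rightarrow> lit set \<Rightarrow> (lit \<times> lit list) set" where
  "prog_t Q I = {(Pos h, b) | h b. (h, b) \<in> Q} \<union> {(NegL a, []) | a. NegL a \<in> I}"

definition prog_tu :: "ratom set \<Rightarrow> gprog \<Rightarrow> lit set \<Rightarrow> (lit \<times> lit list) set" where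
  "prog_tu H Q I = {(Pos h, b) | h b. (h, b) \<in> Q} \<union> {(NegL a, []) | a. a \<in> H \<and> Pos a \<notin> I}"

definition Psi :: "ratom set \<Rightarrow> gprog \<Rightarrow> lit set \<Rightarrow> lit set" where
  "Psi H Q I = (least_model (prog_t Q I) \<inter> Pos ` H)
              \<union> NegL ` (H - {a. Pos a \<in> least_model (prog_tu H Q I)})"

definition consistent :: "ratom set \<Rightarrow> lit set \<Rightarrow> bool" where
  "consistent H I \<longleftrightarrow> I \<subseteq> Pos ` H \<union> NegL ` H \<and> \<not> (\<exists>a. Pos a \<in> I \<and> NegL a \<in> I)"

definition WF :: "ratom set \<Rightarrow> gprog \<Rightarrow> lit set" where
  "WF H Q = (THE I. consistent H I \<and> Psi H Q I = I
                  \<and> (\<forall>J. consistent H J \<and> Psi H Q J = J \<longrightarrow> I \<subseteq> J))"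

definition true3 :: "lit set \<Rightarrow> lit \<Rightarrow> bool" where
  "true3 I l \<longleftrightarrow> l \<in> I"

text \<open>P/M0: ground instances (free variables mapped to constants of F) whose constraint
  holds in M0, with the constraint removed.\<close>
definition reduct :: "nat set \<Rightarrow> hprog \<Rightarrow> 'd struct \<Rightarrow> gprog" where
  "reduct F P M = {(ratom_subst (C \<circ> \<theta>) h, map (lit_subst (C \<circ> \<theta>)) b) | h c b \<theta>.
      (h, c, b) \<in> set P \<and> range \<theta> \<subseteq> F \<and> holds M (fm_subst (C \<circ> \<theta>) c)}"

definition models_wf :: "'d itself \<Rightarrow> nat set \<Rightarrow> hprog \<Rightarrow> fm set \<Rightarrow> lit \<Rightarrow> bool" where
  "models_wf _ F P T L \<longleftrightarrow>
     (\<forall>M :: 'd struct. is_model T M \<longrightarrow> true3 (WF (herbrand_base F) (reduct F P M)) L)"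

fun enc_trm :: "trm \<Rightarrow> nat" where
  "enc_trm (V x) = prod_encode (0, x)"
| "enc_trm (C c) = prod_encode (1, c)"

fun enc_fm :: "fm \<Rightarrow> nat" where
  "enc_fm Tru = prod_encode (0, 0)"
| "enc_fm (Eq s t) = prod_encode (1, prod_encode (enc_trm s, enc_trm t))"
| "enc_fm (Atm p ts) = prod_encode (2, prod_encode (p, list_encode (map enc_trm ts)))"
| "enc_fm (Neg f) = prod_encode (3, enc_fm f)"
| "enc_fm (Conj f g) = prod_encode (4, prod_encode (enc_fm f, enc_fm g))"
| "enc_fm (Disj f g) = prod_encode (5, prod_encode (enc_fm f, enc_fm g))"
| "enc_fm (Ex x f) = prod_encode (6, prod_encode (x, enc_fm f))"

fun enc_ratom :: "ratom \<Rightarrow> nat" where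
  "enc_ratom (RA p ts) = prod_encode (p, list_encode (map enc_trm ts))"

fun enc_lit :: "lit \<Rightarrow> nat" where
  "enc_lit (Pos a) = prod_encode (0, enc_ratom a)"
| "enc_lit (NegL a) = prod_encode (1, enc_ratom a)"

definition enc_rule :: "hrule \<Rightarrow> nat" where
  "enc_rule r = (case r of (h, c, b) \<Rightarrow>
     prod_encode (enc_ratom h, prod_encode (enc_fm c, list_encode (map enc_lit b))))"

definition enc_input :: "hprog \<Rightarrow> ratom \<Rightarrow> nat" where
  "enc_input P A = prod_encode (list_encode (map enc_rule P), enc_ratom A)"

definition closed_constraints :: "nat set \<Rightarrow> fm set \<Rightarrow> fm set" where
  "closed_constraints F Constr = {c \<in> Constr. fm_free c = {} \<and> fm_consts c \<subseteq> F}"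

definition hybrid_program :: "nat set \<Rightarrow> fm set \<Rightarrow> hprog \<Rightarrow> bool" where
  "hybrid_program F Constr P \<longleftrightarrow>
     (\<forall>r\<in>set P. fst (snd r) \<in> Constr \<and> rule_consts r \<subseteq> F)"

definition valid_inputs :: "nat set \<Rightarrow> fm set \<Rightarrow> (hprog \<times> ratom) set" where
  "valid_inputs F Constr = {(P, A). hybrid_program F Constr P \<and> ground_ratom F A}"

end

theory Submission
  imports Defs
begin

(* Idea: for a fixed hybrid program P and ground atom A we compute, without looking at any
   model, closed constraints phi_pos and phi_neg such that for every model M of the theory,
     M |= phi_pos  iff  A is true in WF(P/M),     M |= phi_neg  iff  A is false in WF(P/M).
   Then (P,T) |=wf A iff T entails phi_pos, which is decidable by assumption; likewise for the
   negation.  The formulas come from running the fixpoint construction of WF symbolically. *)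

section \<open>The well-founded model as a finite iteration\<close>

lemma chain_stabilises:
  fixes s :: "nat \<Rightarrow> 'a set"
  assumes step: "\<And>j. s (Suc j) = f (s j)" and inc: "\<And>j. s j \<subseteq> s (Suc j)"
    and bounded: "\<And>j. s j - s 0 \<subseteq> X" and fin: "finite X" and card: "card X \<le> m"
  shows "s (m + k) = s m"
proof -
  have "\<exists>j\<le>m. s j = s (Suc j)"
  proof (rule ccontr)
    assume "\<not> (\<exists>j\<le>m. s j = s (Suc j))"
    then have strict: "\<And>j. j \<le> m \<Longrightarrow> s j \<subset> s (Suc j)" using inc by blast
    have base: "s 0 \<subseteq> s j" for j
    proof (induction j)
      case (Suc j) then show ?case using inc[of j] by blast
    qed simp
    have grow: "j \<le> Suc m \<Longrightarrow> j \<le> card (s j - s 0)" for j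
    proof (induction j)
      case (Suc j)
      have "finite (s (Suc j) - s 0)" using bounded fin finite_subset by blast
      moreover have "s j - s 0 \<subset> s (Suc j) - s 0" using strict[of j] Suc.prems base[of j] by auto
      ultimately have "card (s j - s 0) < card (s (Suc j) - s 0)" by (intro psubset_card_mono)
      then show ?case using Suc by simp
    qed simp
    have "card (s (Suc m) - s 0) \<le> card X" using bounded fin by (intro card_mono) auto
    with grow[of "Suc m"] card show False by simp
  qed
  then obtain j where j: "j \<le> m" "s j = s (Suc j)" by blast
  have const: "s (j + i) = s j" for i
  proof (induction i)
    case (Suc i)
    have "s (j + Suc i) = f (s (j + i))" using step[of "j + i"] by simp
    also have "\<dots> = s (Suc j)" using Suc.IH step[of j] by simp
    finally show ?case using j(2) by simp
  qed simp
  show ?thesis using const[of "m - j + k"] const[of "m - j"] j(1) by simp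
qed

lemma least_model_least: "(\<forall>h b. (h, b) \<in> R \<longrightarrow> set b \<subseteq> Y \<longrightarrow> h \<in> Y) \<Longrightarrow> least_model R \<subseteq> Y"
  unfolding least_model_def by (rule Inter_lower) simp

lemma least_model_mono: "R \<subseteq> R' \<Longrightarrow> least_model R \<subseteq> least_model R'"
  unfolding least_model_def by (rule Inter_anti_mono) blast

lemma least_model_closed:
  assumes hb: "(h, b) \<in> R" and body: "set b \<subseteq> least_model R"
  shows "h \<in> least_model R"
  unfolding least_model_def
proof (rule InterI)
  fix S assume S: "S \<in> {S. \<forall>h b. (h, b) \<in> R \<longrightarrow> set b \<subseteq> S \<longrightarrow> h \<in> S}"
  then have "least_model R \<subseteq> S" by (intro least_model_least) simp
  with hb body S show "h \<in> S" by blast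
qed

text \<open>Both definite programs used by Psi consist of Q together with a set N of
  negative facts.\<close>
definition prog_neg :: "gprog \<Rightarrow> ratom set \<Rightarrow> (lit \<times> lit list) set" where
  "prog_neg Q N = {(Pos h, b) | h b. (h, b) \<in> Q} \<union> {(NegL a, []) | a. a \<in> N}"

lemma prog_t_neg: "prog_t Q I = prog_neg Q {x. NegL x \<in> I}"
  unfolding prog_t_def prog_neg_def by simp

lemma prog_tu_neg: "prog_tu H Q I = prog_neg Q {x. x \<in> H \<and> Pos x \<notin> I}"
  unfolding prog_tu_def prog_neg_def by simp

definition tp :: "gprog \<Rightarrow> ratom set \<Rightarrow> ratom set \<Rightarrow> ratom set" where
  "tp Q N Y = {h | h b. (h, b) \<in> Q \<and> (\<forall>l\<in>set b. case l of Pos x \<Rightarrow> x \<in> Y | NegL x \<Rightarrow> x \<in> N)}"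

lemma tp_iff:
  "h \<in> tp Q N Y \<longleftrightarrow> (\<exists>b. (h, b) \<in> Q \<and> (\<forall>l\<in>set b. case l of Pos x \<Rightarrow> x \<in> Y | NegL x \<Rightarrow> x \<in> N))"
  unfolding tp_def by blast

lemma tp_mono:
  assumes "Y \<subseteq> Y'" shows "tp Q N Y \<subseteq> tp Q N Y'"
proof
  fix h assume "h \<in> tp Q N Y"
  then obtain b where hb: "(h, b) \<in> Q"
    and body: "\<forall>l\<in>set b. case l of Pos x \<Rightarrow> x \<in> Y | NegL x \<Rightarrow> x \<in> N"
    unfolding tp_iff by blast
  have "\<forall>l\<in>set b. case l of Pos x \<Rightarrow> x \<in> Y' | NegL x \<Rightarrow> x \<in> N"
    using body assms by (auto split: lit.splits)
  with hb show "h \<in> tp Q N Y'" unfolding tp_iff by blast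
qed

lemma tp_heads: "tp Q N Y \<subseteq> fst ` Q"
proof
  fix h assume "h \<in> tp Q N Y"
  then obtain b where "(h, b) \<in> Q" unfolding tp_iff by blast
  then show "h \<in> fst ` Q" by (rule rev_image_eqI) simp
qed

lemma tp_iter_heads: "(tp Q N ^^ k) {} \<subseteq> fst ` Q"
  by (cases k) (auto dest: tp_heads[THEN subsetD])

lemma least_model_prog_neg:
  assumes fin: "finite (fst ` Q)" and card: "card (fst ` Q) \<le> K"
  shows "Pos a \<in> least_model (prog_neg Q N) \<longleftrightarrow> a \<in> (tp Q N ^^ K) {}"
proof
  let ?S = "(tp Q N ^^ K) {}"
  have chain: "(tp Q N ^^ k) {} \<subseteq> (tp Q N ^^ Suc k) {}" for k
    by (induction k) (auto intro: tp_mono[THEN subsetD])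
  have "(tp Q N ^^ (K + 1)) {} = ?S"
    by (rule chain_stabilises[where f = "tp Q N" and X = "fst ` Q"])
      (use fin card chain tp_iter_heads in auto)
  then have fixpoint: "tp Q N ?S = ?S" by simp
  have "least_model (prog_neg Q N) \<subseteq> Pos ` ?S \<union> NegL ` N"
  proof (rule least_model_least, intro allI impI)
    fix h b assume hb: "(h, b) \<in> prog_neg Q N" and sb: "set b \<subseteq> Pos ` ?S \<union> NegL ` N"
    show "h \<in> Pos ` ?S \<union> NegL ` N"
    proof (cases h)
      case (Pos x)
      with hb have "(x, b) \<in> Q" unfolding prog_neg_def by auto
      moreover have "\<forall>l\<in>set b. case l of Pos y \<Rightarrow> y \<in> ?S | NegL y \<Rightarrow> y \<in> N"
        using sb by (auto split: lit.splits)
      ultimately have "x \<in> tp Q N ?S" unfolding tp_iff by blast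
      then show ?thesis using Pos fixpoint by simp
    qed (use hb in \<open>auto simp: prog_neg_def\<close>)
  qed
  then show "Pos a \<in> least_model (prog_neg Q N) \<Longrightarrow> a \<in> ?S" by auto
next
  have neg: "x \<in> N \<Longrightarrow> NegL x \<in> least_model (prog_neg Q N)" for x
    by (rule least_model_closed[of _ "[]"]) (auto simp: prog_neg_def)
  have "a \<in> (tp Q N ^^ k) {} \<Longrightarrow> Pos a \<in> least_model (prog_neg Q N)" for k a
  proof (induction k arbitrary: a)
    case (Suc k)
    then obtain b where ab: "(a, b) \<in> Q"
      and body: "\<forall>l\<in>set b. case l of Pos x \<Rightarrow> x \<in> (tp Q N ^^ k) {} | NegL x \<Rightarrow> x \<in> N"
      by (auto simp: tp_iff)
    have "l \<in> least_model (prog_neg Q N)" if "l \<in> set b" for l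
      using body that Suc.IH neg by (cases l) auto
    then have "set b \<subseteq> least_model (prog_neg Q N)" by blast
    moreover have "(Pos a, b) \<in> prog_neg Q N" using ab by (auto simp: prog_neg_def)
    ultimately show ?case by (rule least_model_closed[rotated])
  qed simp
  then show "a \<in> (tp Q N ^^ K) {} \<Longrightarrow> Pos a \<in> least_model (prog_neg Q N)" .
qed

lemma Psi_mono: "I \<subseteq> J \<Longrightarrow> Psi H Q I \<subseteq> Psi H Q J"
proof -
  assume ij: "I \<subseteq> J"
  have "least_model (prog_t Q I) \<subseteq> least_model (prog_t Q J)"
    by (rule least_model_mono) (use ij in \<open>auto simp: prog_t_def\<close>)
  moreover have "least_model (prog_tu H Q J) \<subseteq> least_model (prog_tu H Q I)"
    by (rule least_model_mono) (use ij in \<open>auto simp: prog_tu_def\<close>)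
  ultimately show ?thesis unfolding Psi_def by blast
qed

lemma Psi_Pos: "Pos a \<in> Psi H Q I \<longleftrightarrow> Pos a \<in> least_model (prog_t Q I) \<and> a \<in> H"
  unfolding Psi_def by auto

lemma Psi_NegL: "NegL a \<in> Psi H Q I \<longleftrightarrow> a \<in> H \<and> Pos a \<notin> least_model (prog_tu H Q I)"
  unfolding Psi_def by auto

lemma Psi_consistent: "consistent H I \<Longrightarrow> consistent H (Psi H Q I)"
proof -
  assume c: "consistent H I"
  have "prog_t Q I \<subseteq> prog_tu H Q I"
    using c unfolding prog_t_def prog_tu_def consistent_def by blast
  then have lm: "least_model (prog_t Q I) \<subseteq> least_model (prog_tu H Q I)" by (rule least_model_mono)
  have "\<not> (Pos a \<in> Psi H Q I \<and> NegL a \<in> Psi H Q I)" for a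
    using lm unfolding Psi_Pos Psi_NegL by blast
  moreover have "Psi H Q I \<subseteq> Pos ` H \<union> NegL ` H" unfolding Psi_def by blast
  ultimately show ?thesis unfolding consistent_def by blast
qed

abbreviation Psi_iter :: "ratom set \<Rightarrow> gprog \<Rightarrow> nat \<Rightarrow> lit set" where
  "Psi_iter H Q j \<equiv> (Psi H Q ^^ j) {}"

lemma Psi_iter_consistent: "consistent H (Psi_iter H Q j)"
proof (induction j)
  case 0 show ?case by (simp add: consistent_def)
next
  case (Suc j) then show ?case by (simp add: Psi_consistent)
qed

lemma Psi_iter_chain: "Psi_iter H Q j \<subseteq> Psi_iter H Q (Suc j)"
  by (induction j) (auto intro: Psi_mono[THEN subsetD])

lemma Psi_iter_below_fixpoint: "Psi H Q J = J \<Longrightarrow> Psi_iter H Q j \<subseteq> J"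
  by (induction j) (auto dest: Psi_mono[of _ J H Q])

text \<open>After the first step, the iterates of Psi only change on literals over heads
  of Q: positive literals can only be derived for heads, and an atom that is not a head is
  already false after one step.\<close>
lemma Psi_iter_growth:
  assumes fin: "finite (fst ` Q)" and card: "card (fst ` Q) \<le> K"
  shows "Psi_iter H Q (Suc j) - Psi_iter H Q 1 \<subseteq> Pos ` fst ` Q \<union> NegL ` fst ` Q"
proof
  fix l assume l: "l \<in> Psi_iter H Q (Suc j) - Psi_iter H Q 1"
  have heads: "Pos a \<in> least_model (prog_neg Q N) \<Longrightarrow> a \<in> fst ` Q" for a N
    using least_model_prog_neg[OF fin card, of a N] tp_iter_heads[where k = K] by blast
  show "l \<in> Pos ` fst ` Q \<union> NegL ` fst ` Q"
  proof (cases l)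
    case (Pos a)
    with l have "Pos a \<in> Psi H Q (Psi_iter H Q j)" by simp
    then have "Pos a \<in> least_model (prog_t Q (Psi_iter H Q j))" by (simp add: Psi_Pos)
    then have "a \<in> fst ` Q" unfolding prog_t_neg by (rule heads)
    then show ?thesis using Pos by blast
  next
    case (NegL a)
    with l have "NegL a \<in> Psi H Q (Psi_iter H Q j)" and not1: "NegL a \<notin> Psi H Q {}" by simp_all
    then have "a \<in> H" by (simp add: Psi_NegL)
    with not1 have "Pos a \<in> least_model (prog_tu H Q {})" by (simp add: Psi_NegL)
    then have "a \<in> fst ` Q" unfolding prog_tu_neg by (rule heads)
    then show ?thesis using NegL by blast
  qed
qed

lemma WF_eq_Psi_iter:
  assumes fin: "finite (fst ` Q)" and card: "card (fst ` Q) \<le> K"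
  shows "WF H Q = Psi_iter H Q (K + K + 2)"
proof -
  let ?X = "Pos ` fst ` Q \<union> NegL ` fst ` Q"
  have "card ?X \<le> card (Pos ` fst ` Q) + card (NegL ` fst ` Q)" by (rule card_Un_le)
  also have "\<dots> \<le> card (fst ` Q) + card (fst ` Q)" by (intro add_mono card_image_le fin)
  also have "\<dots> \<le> K + K" using card by simp
  finally have cardX: "card ?X \<le> K + K" .
  have stable: "Psi_iter H Q (Suc (K + K + k)) = Psi_iter H Q (Suc (K + K))" for k
  proof (rule chain_stabilises[where f = "Psi H Q" and X = ?X and s = "\<lambda>j. Psi_iter H Q (Suc j)"])
    show "Psi_iter H Q (Suc j) \<subseteq> Psi_iter H Q (Suc (Suc j))" for j
      by (rule Psi_iter_chain)
    show "Psi_iter H Q (Suc j) - Psi_iter H Q (Suc 0) \<subseteq> ?X" for j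
      using Psi_iter_growth[OF fin card] by simp
  qed (use fin cardX in simp_all)
  let ?I = "Psi_iter H Q (K + K + 2)"
  have fixpoint: "Psi H Q ?I = ?I"
    using stable[of 2] stable[of 1] by (simp add: numeral_2_eq_2)
  show ?thesis
    unfolding WF_def
  proof (rule the_equality)
    show "consistent H ?I \<and> Psi H Q ?I = ?I \<and> (\<forall>J. consistent H J \<and> Psi H Q J = J \<longrightarrow> ?I \<subseteq> J)"
      using Psi_iter_consistent[where j = "K + K + 2"] fixpoint
        Psi_iter_below_fixpoint[of H Q _ "K + K + 2"] by blast
  next
    fix I' assume I': "consistent H I' \<and> Psi H Q I' = I' \<and> (\<forall>J. consistent H J \<and> Psi H Q J = J \<longrightarrow> I' \<subseteq> J)"
    then have "I' \<subseteq> ?I" using Psi_iter_consistent[where j = "K + K + 2"] fixpoint by blast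
    moreover have "?I \<subseteq> I'" using I' Psi_iter_below_fixpoint[of H Q I' "K + K + 2"] by blast
    ultimately show "I' = ?I" by (rule subset_antisym)
  qed
qed
section \<open>Grounding a hybrid program over a finite set of constants\<close>

lemma trm_val_agree: "(\<forall>x\<in>trm_vars t. va x = vb x) \<Longrightarrow> trm_val M va t = trm_val M vb t"
  by (cases t) auto

lemma sat_agree: "(\<forall>x\<in>fm_free f. va x = vb x) \<Longrightarrow> sat M va f = sat M vb f"
proof (induction f arbitrary: va vb)
  case (Eq s t) then show ?case using trm_val_agree[of s va vb M] trm_val_agree[of t va vb M] by auto
next
  case (Atm p ts)
  then have "\<forall>t\<in>set ts. trm_val M va t = trm_val M vb t" by (auto intro!: trm_val_agree)
  then have "map (trm_val M va) ts = map (trm_val M vb) ts" by (simp add: map_eq_conv)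
  then show ?case by (simp del: map_eq_conv)
next
  case (Ex x f)
  have "sat M (va(x := d)) f = sat M (vb(x := d)) f" for d
    using Ex.prems by (intro Ex.IH) auto
  then show ?case by simp
qed (simp_all, blast+)

lemma holds_closed: "fm_free f = {} \<Longrightarrow> holds M f \<longleftrightarrow> sat M va f"
  unfolding holds_def using sat_agree[of f _ va M] by auto

lemma trm_val_subst: "trm_val M va (trm_subst \<sigma> t) = trm_val M (\<lambda>y. trm_val M va (\<sigma> y)) t"
  by (cases t) auto

text \<open>Substitution lemma, for substitutions that introduce no variable other than the one they
  replace (in particular for ground substitutions), so that no capture occurs.\<close>
lemma sat_subst:
  "(\<forall>y. trm_vars (\<sigma> y) \<subseteq> {y}) \<Longrightarrow> sat M va (fm_subst \<sigma> f) = sat M (\<lambda>y. trm_val M va (\<sigma> y)) f"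
proof (induction f arbitrary: \<sigma> va)
  case (Eq s t) then show ?case by (simp add: trm_val_subst)
next
  case (Atm p ts) then show ?case by (simp add: trm_val_subst comp_def)
next
  case (Ex x f)
  let ?s = "\<sigma>(x := V x)"
  have no_capture: "\<forall>y. trm_vars (?s y) \<subseteq> {y}" using Ex.prems by auto
  have val: "(\<lambda>y. trm_val M (va(x := d)) (?s y)) = (\<lambda>y. trm_val M va (\<sigma> y))(x := d)" for d
  proof
    fix y show "trm_val M (va(x := d)) (?s y) = ((\<lambda>y. trm_val M va (\<sigma> y))(x := d)) y"
    proof (cases "y = x")
      case False
      then have "x \<notin> trm_vars (\<sigma> y)" using Ex.prems by auto
      then show ?thesis using False by (auto intro!: trm_val_agree)
    qed simp
  qed
  have "sat M (va(x := d)) (fm_subst ?s f) = sat M ((\<lambda>y. trm_val M va (\<sigma> y))(x := d)) f" for d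
    using Ex.IH[OF no_capture, of "va(x := d)"] unfolding val .
  then show ?case by simp
qed auto

text \<open>Lookup in an association list of numbers; the last binding wins, 0 is the default.
  It is written as a left fold because the decision procedure computes it that way.\<close>
definition alookup :: "(nat \<times> nat) list \<Rightarrow> nat \<Rightarrow> nat" where
  "alookup l k = foldl (\<lambda>acc x. if fst x = k then snd x else acc) 0 l"

lemma alookup_mem: "k \<in> fst ` set l \<Longrightarrow> (k, alookup l k) \<in> set l"
  unfolding alookup_def by (induction l rule: rev_induct) (auto simp: image_iff)

lemma alookup_eq: "\<forall>x\<in>set l. fst x = k \<longrightarrow> snd x = w \<Longrightarrow> k \<in> fst ` set l \<Longrightarrow> alookup l k = w"
  using alookup_mem by fastforce

lemma alookup_in: "distinct (map fst l) \<Longrightarrow> (k, v) \<in> set l \<Longrightarrow> alookup l k = v"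
  by (rule alookup_eq) (force dest: eq_key_imp_eq_value)+

definition subst_of :: "(nat \<times> nat) list \<Rightarrow> nat \<Rightarrow> trm" where
  "subst_of l x = C (alookup l x)"

fun assign :: "'d struct \<Rightarrow> (nat \<times> nat) list \<Rightarrow> (nat \<Rightarrow> 'd) \<Rightarrow> nat \<Rightarrow> 'd" where
  "assign M [] va = va"
| "assign M (x # l) va = (assign M l va)(fst x := fst M (snd x))"

lemma assign_val:
  assumes "distinct (map fst l)"
  shows "assign M l va y = (if y \<in> fst ` set l then fst M (alookup l y) else va y)"
proof -
  have "(y, v) \<in> set l \<Longrightarrow> assign M l va y = fst M v" for v
    using assms by (induction l) (auto simp: image_iff)
  moreover have "y \<notin> fst ` set l \<Longrightarrow> assign M l va y = va y"
    by (induction l) auto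
  ultimately show ?thesis using alookup_mem by auto
qed

text \<open>A constraint instantiated by an assignment list l, written as a closed constraint:
  the variable x bound to c becomes \<open>\<exists>x. x = c \<and> \<dots>\<close>. Unlike the substitution, this
  stays inside any class of constraints closed under equations, conjunction and \<open>\<exists>\<close>.\<close>
definition inst_constr :: "(nat \<times> nat) list \<Rightarrow> fm \<Rightarrow> fm" where
  "inst_constr l c = foldl (\<lambda>acc x. Ex (fst x) (Conj (Eq (V (fst x)) (C (snd x))) acc)) c l"

lemma sat_inst_constr: "sat M va (inst_constr l c) = sat M (assign M l va) c"
  unfolding inst_constr_def
proof (induction l arbitrary: c)
  case (Cons x l) then show ?case by (simp add: fun_upd_def)
qed simp

lemma fm_free_inst_constr: "fm_free (inst_constr l c) = fm_free c - fst ` set l"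
  unfolding inst_constr_def by (induction l arbitrary: c) auto

lemma fm_consts_inst_constr: "fm_consts (inst_constr l c) = fm_consts c \<union> snd ` set l"
  unfolding inst_constr_def by (induction l arbitrary: c) auto

lemma inst_constr_closed_under:
  assumes "\<forall>s t. Eq s t \<in> Cs" "\<forall>f\<in>Cs. \<forall>g\<in>Cs. Conj f g \<in> Cs" "\<forall>x. \<forall>f\<in>Cs. Ex x f \<in> Cs"
  shows "c \<in> Cs \<Longrightarrow> inst_constr l c \<in> Cs"
  unfolding inst_constr_def using assms by (induction l arbitrary: c) auto

text \<open>All lists assigning values from Fl to the variables n-1, ..., 0 (in this order),
  generated by folds that the decision procedure mirrors step by step.\<close>
definition extend_all :: "nat \<Rightarrow> nat \<Rightarrow> (nat \<times> nat) list list \<Rightarrow> (nat \<times> nat) list list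
    \<Rightarrow> (nat \<times> nat) list list" where
  "extend_all k c acc L = foldl (\<lambda>acc l. ((k, c) # l) # acc) acc L"

definition extend_var :: "nat list \<Rightarrow> nat \<Rightarrow> (nat \<times> nat) list list \<Rightarrow> (nat \<times> nat) list list" where
  "extend_var Fl k L = foldl (\<lambda>acc c. extend_all k c acc L) [] Fl"

definition assignments :: "nat list \<Rightarrow> nat \<Rightarrow> (nat \<times> nat) list list" where
  "assignments Fl n = foldl (\<lambda>L k. extend_var Fl k L) [[]] [0..<n]"

lemma set_extend_var: "set (extend_var Fl k L) = {(k, c) # l | c l. c \<in> set Fl \<and> l \<in> set L}"
proof -
  have ext: "set (extend_all k c acc L) = set acc \<union> (\<lambda>l. (k, c) # l) ` set L" for c acc
    unfolding extend_all_def by (induction L arbitrary: acc) auto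
  have "set (foldl (\<lambda>acc c. extend_all k c acc L) acc Fs)
      = set acc \<union> {(k, c) # l | c l. c \<in> set Fs \<and> l \<in> set L}" for acc Fs
    by (induction Fs arbitrary: acc) (auto simp: ext)
  then show ?thesis by (simp add: extend_var_def)
qed

lemma set_assignments:
  "set (assignments Fl n) = {l. map fst l = rev [0..<n] \<and> (\<forall>x\<in>set l. snd x \<in> set Fl)}"
proof (induction n)
  case 0 then show ?case by (auto simp: assignments_def)
next
  case (Suc n)
  have step: "assignments Fl (Suc n) = extend_var Fl n (assignments Fl n)"
    by (simp add: assignments_def)
  show ?case
  proof (intro set_eqI iffI)
    fix l assume "l \<in> set (assignments Fl (Suc n))"
    then obtain c l' where "l = (n, c) # l'" "c \<in> set Fl" "l' \<in> set (assignments Fl n)"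
      unfolding step set_extend_var by blast
    then show "l \<in> {l. map fst l = rev [0..<Suc n] \<and> (\<forall>x\<in>set l. snd x \<in> set Fl)}"
      using Suc by simp
  next
    fix l assume l: "l \<in> {l. map fst l = rev [0..<Suc n] \<and> (\<forall>x\<in>set l. snd x \<in> set Fl)}"
    then obtain c l' where lx: "l = (n, c) # l'" by (cases l) auto
    with l have "c \<in> set Fl" "l' \<in> set (assignments Fl n)" using Suc by auto
    then show "l \<in> set (assignments Fl (Suc n))" unfolding step set_extend_var using lx by blast
  qed
qed

lemma assignments_keys:
  "l \<in> set (assignments Fl n) \<Longrightarrow> distinct (map fst l) \<and> fst ` set l = {..<n}"
proof -
  assume "l \<in> set (assignments Fl n)"
  then have "map fst l = rev [0..<n]" by (simp add: set_assignments)
  then have "distinct (map fst l)" "set (map fst l) = {..<n}" by (metis distinct_rev distinct_upt, auto)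
  then show ?thesis by simp
qed

text \<open>Every variable of a rule is at most the code of the rule, so it suffices to ground
  the variables below that code.\<close>

lemma triangle_ge: "n \<le> triangle n"
  by (induction n) auto

lemma prod_encode_ge1: "a \<le> prod_encode (a, b)"
  by (simp add: prod_encode_def)

lemma prod_encode_ge2: "b \<le> prod_encode (a, b)"
  using triangle_ge[of "a + b"] by (simp add: prod_encode_def)

lemma list_encode_ge_length: "length xs \<le> list_encode xs"
  by (induction xs) (auto intro: order.trans[OF _ prod_encode_ge2])

lemma list_encode_gt_elem: "x \<in> set xs \<Longrightarrow> x < list_encode xs"
proof (induction xs)
  case (Cons y ys)
  have "y < list_encode (y # ys)" using prod_encode_ge1[of y "list_encode ys"] by simp
  moreover have "list_encode ys < list_encode (y # ys)" using prod_encode_ge2[of "list_encode ys" y] by simp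
  ultimately show ?case using Cons by auto
qed simp

lemma le_prod_encode1: "x \<le> a \<Longrightarrow> x \<le> prod_encode (a, b)"
  using prod_encode_ge1[of a b] by linarith

lemma le_prod_encode2: "x \<le> b \<Longrightarrow> x \<le> prod_encode (a, b)"
  using prod_encode_ge2[of b a] by linarith

lemma le_list_encode: "x \<le> e \<Longrightarrow> e \<in> set xs \<Longrightarrow> x \<le> list_encode xs"
  using list_encode_gt_elem[of e xs] by linarith

fun ratom_vars :: "ratom \<Rightarrow> nat set" where
  "ratom_vars (RA p ts) = (\<Union>t\<in>set ts. trm_vars t)"

lemma trm_var_bound: "x \<in> trm_vars t \<Longrightarrow> x \<le> enc_trm t"
  by (cases t) (auto intro: le_prod_encode2)

lemma ratom_var_bound: "x \<in> ratom_vars a \<Longrightarrow> x \<le> enc_ratom a"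
  by (cases a) (auto intro!: le_prod_encode2 le_list_encode[OF trm_var_bound])

lemma fm_var_bound: "x \<in> fm_free c \<Longrightarrow> x \<le> enc_fm c"
proof (induction c)
  case (Eq s t)
  then have "x \<le> prod_encode (enc_trm s, enc_trm t)"
    using le_prod_encode1 le_prod_encode2 trm_var_bound by auto
  then show ?case by (simp add: le_prod_encode2)
next
  case (Atm p ts) then show ?case by (auto intro!: le_prod_encode2 le_list_encode[OF trm_var_bound])
next
  case (Conj f g)
  then have "x \<le> prod_encode (enc_fm f, enc_fm g)" using le_prod_encode1 le_prod_encode2 by auto
  then show ?case by (simp add: le_prod_encode2)
next
  case (Disj f g)
  then have "x \<le> prod_encode (enc_fm f, enc_fm g)" using le_prod_encode1 le_prod_encode2 by auto
  then show ?case by (simp add: le_prod_encode2)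
qed (auto intro!: le_prod_encode2)

lemma rule_var_bound:
  assumes "x \<in> ratom_vars h \<or> x \<in> fm_free c \<or> (\<exists>l\<in>set b. x \<in> ratom_vars (lit_atom l))"
  shows "x \<le> enc_rule (h, c, b)"
proof -
  have lit: "x \<le> enc_lit l" if "x \<in> ratom_vars (lit_atom l)" for l
    using ratom_var_bound[OF that] by (cases l) (auto intro: le_prod_encode2)
  have "x \<le> enc_ratom h \<or> x \<le> enc_fm c \<or> x \<le> list_encode (map enc_lit b)"
    using assms ratom_var_bound fm_var_bound lit le_list_encode by fastforce
  then show ?thesis by (auto simp: enc_rule_def intro: le_prod_encode1 le_prod_encode2)
qed

text \<open>The ground instance of a rule under an assignment list; its constraint remains a
  (closed) formula, to be evaluated in each model.\<close>
definition ground_rule :: "hrule \<Rightarrow> (nat \<times> nat) list \<Rightarrow> hrule" where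
  "ground_rule r l = (case r of (h, c, b) \<Rightarrow>
     (ratom_subst (subst_of l) h, inst_constr l c, map (lit_subst (subst_of l)) b))"

definition ground_prog :: "nat list \<Rightarrow> hprog \<Rightarrow> hprog" where
  "ground_prog Fl P = foldl (\<lambda>acc r. foldl (\<lambda>acc l. ground_rule r l # acc) acc
       (assignments Fl (Suc (enc_rule r)))) [] P"

lemma set_ground_prog:
  "set (ground_prog Fl P) = (\<Union>r\<in>set P. ground_rule r ` set (assignments Fl (Suc (enc_rule r))))"
proof -
  have inner: "set (foldl (\<lambda>acc l. ground_rule r l # acc) acc L) = set acc \<union> ground_rule r ` set L"
    for r acc L
    by (induction L arbitrary: acc) auto
  have "set (foldl (\<lambda>acc r. foldl (\<lambda>acc l. ground_rule r l # acc) acc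
       (assignments Fl (Suc (enc_rule r)))) acc P)
     = set acc \<union> (\<Union>r\<in>set P. ground_rule r ` set (assignments Fl (Suc (enc_rule r))))" for acc
    by (induction P arbitrary: acc) (simp_all add: inner Un_assoc)
  then show ?thesis by (simp add: ground_prog_def)
qed

lemma trm_subst_cong: "(\<forall>x\<in>trm_vars t. \<sigma> x = \<sigma>' x) \<Longrightarrow> trm_subst \<sigma> t = trm_subst \<sigma>' t"
  by (cases t) auto

lemma ratom_subst_cong: "(\<forall>x\<in>ratom_vars a. \<sigma> x = \<sigma>' x) \<Longrightarrow> ratom_subst \<sigma> a = ratom_subst \<sigma>' a"
  by (cases a) (auto intro!: trm_subst_cong)

lemma lit_subst_cong: "(\<forall>x\<in>ratom_vars (lit_atom l). \<sigma> x = \<sigma>' x) \<Longrightarrow> lit_subst \<sigma> l = lit_subst \<sigma>' l"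
  by (cases l) (auto intro!: ratom_subst_cong)

lemma lit_atom_subst: "lit_atom (lit_subst \<sigma> l) = ratom_subst \<sigma> (lit_atom l)"
  by (cases l) auto

lemma ground_rule_agrees:
  assumes l: "l \<in> set (assignments Fl (Suc (enc_rule (h, c, b))))"
    and th: "\<forall>y \<le> enc_rule (h, c, b). \<theta> y = alookup l y"
  shows "ratom_subst (subst_of l) h = ratom_subst (C \<circ> \<theta>) h"
    and "map (lit_subst (subst_of l)) b = map (lit_subst (C \<circ> \<theta>)) b"
    and "holds M (inst_constr l c) = holds M (fm_subst (C \<circ> \<theta>) c)"
proof -
  let ?B = "enc_rule (h, c, b)"
  have keys: "distinct (map fst l)" "fst ` set l = {..<Suc ?B}" using assignments_keys[OF l] by auto
  have same: "subst_of l y = (C \<circ> \<theta>) y" if "y \<le> ?B" for y using th that by (simp add: subst_of_def)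
  show "ratom_subst (subst_of l) h = ratom_subst (C \<circ> \<theta>) h"
  proof (rule ratom_subst_cong, intro ballI same)
    fix x assume "x \<in> ratom_vars h" then show "x \<le> ?B" by (intro rule_var_bound) simp
  qed
  show "map (lit_subst (subst_of l)) b = map (lit_subst (C \<circ> \<theta>)) b"
  proof (rule map_cong[OF refl], rule lit_subst_cong, intro ballI same)
    fix x l' assume "l' \<in> set b" "x \<in> ratom_vars (lit_atom l')"
    then show "x \<le> ?B" by (intro rule_var_bound) blast
  qed
  have "sat M va (inst_constr l c) = sat M (\<lambda>y. fst M (\<theta> y)) c" for va
    unfolding sat_inst_constr
  proof (rule sat_agree, intro ballI)
    fix y assume "y \<in> fm_free c"
    then have "y \<le> ?B" by (intro rule_var_bound) auto
    then show "assign M l va y = fst M (\<theta> y)" using assign_val[OF keys(1), of M va y] keys(2) th by auto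
  qed
  moreover have "sat M va (fm_subst (C \<circ> \<theta>) c) = sat M (\<lambda>y. fst M (\<theta> y)) c" for va
    by (subst sat_subst) auto
  ultimately show "holds M (inst_constr l c) = holds M (fm_subst (C \<circ> \<theta>) c)"
    unfolding holds_def by simp
qed

lemma reduct_ground_prog:
  assumes "Fl \<noteq> []"
  shows "reduct (set Fl) P M
    = {(fst g, snd (snd g)) | g. g \<in> set (ground_prog Fl P) \<and> holds M (fst (snd g))}"
proof (intro set_eqI iffI)
  fix z assume "z \<in> reduct (set Fl) P M"
  then obtain h c b \<theta> where z: "z = (ratom_subst (C \<circ> \<theta>) h, map (lit_subst (C \<circ> \<theta>)) b)"
    and r: "(h, c, b) \<in> set P" and rg: "range \<theta> \<subseteq> set Fl" and hd: "holds M (fm_subst (C \<circ> \<theta>) c)"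
    unfolding reduct_def by blast
  let ?B = "enc_rule (h, c, b)"
  let ?l = "map (\<lambda>y. (y, \<theta> y)) (rev [0..<Suc ?B])"
  have l: "?l \<in> set (assignments Fl (Suc ?B))" using rg by (auto simp: set_assignments map_idI)
  have "\<forall>y \<le> ?B. \<theta> y = alookup ?l y"
  proof (intro allI impI)
    fix y assume "y \<le> ?B"
    then have "y \<in> set (rev [0..<Suc ?B])" by (simp only: set_rev set_upt atLeastLessThan_iff) simp
    then have "(y, \<theta> y) \<in> set ?l" by auto
    then show "\<theta> y = alookup ?l y" by (simp add: alookup_in comp_def)
  qed
  note agree = ground_rule_agrees[OF l this]
  have "ground_rule (h, c, b) ?l \<in> set (ground_prog Fl P)" using r l unfolding set_ground_prog by blast
  moreover have "z = (fst (ground_rule (h, c, b) ?l), snd (snd (ground_rule (h, c, b) ?l)))"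
    using agree z by (simp add: ground_rule_def)
  moreover have "holds M (fst (snd (ground_rule (h, c, b) ?l)))"
    using agree(3) hd unfolding ground_rule_def by simp blast
  ultimately show "z \<in> {(fst g, snd (snd g)) | g. g \<in> set (ground_prog Fl P) \<and> holds M (fst (snd g))}"
    by blast
next
  fix z assume "z \<in> {(fst g, snd (snd g)) | g. g \<in> set (ground_prog Fl P) \<and> holds M (fst (snd g))}"
  then obtain r l where z: "z = (fst (ground_rule r l), snd (snd (ground_rule r l)))" and r: "r \<in> set P"
    and l: "l \<in> set (assignments Fl (Suc (enc_rule r)))" and hd: "holds M (fst (snd (ground_rule r l)))"
    unfolding set_ground_prog by blast
  obtain h c b where re: "r = (h, c, b)" by (cases r) auto
  let ?B = "enc_rule (h, c, b)"
  define \<theta> where "\<theta> y = (if y \<le> ?B then alookup l y else hd Fl)" for y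
  have keys: "fst ` set l = {..<Suc ?B}" using assignments_keys l re by auto
  have vals: "\<forall>x\<in>set l. snd x \<in> set Fl" using l by (simp add: set_assignments)
  have "alookup l y \<in> set Fl" if "y \<le> ?B" for y
  proof -
    have "(y, alookup l y) \<in> set l" using that keys by (intro alookup_mem) auto
    then show ?thesis using vals by force
  qed
  then have rg: "range \<theta> \<subseteq> set Fl" using assms by (auto simp: \<theta>_def)
  have "\<forall>y \<le> ?B. \<theta> y = alookup l y" by (simp add: \<theta>_def)
  note agree = ground_rule_agrees[OF l[unfolded re] this]
  have "holds M (inst_constr l c)" using hd re by (simp add: ground_rule_def)
  then have "holds M (fm_subst (C \<circ> \<theta>) c)" using agree(3) by blast
  moreover have "z = (ratom_subst (C \<circ> \<theta>) h, map (lit_subst (C \<circ> \<theta>)) b)"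
    using z agree(1,2) re by (simp add: ground_rule_def)
  ultimately show "z \<in> reduct (set Fl) P M"
    unfolding reduct_def using r re rg by blast
qed

lemma ground_ratom_subst:
  assumes "\<forall>x\<in>ratom_vars a. x \<in> fst ` set l" "\<forall>x\<in>set l. snd x \<in> F" "ratom_consts a \<subseteq> F"
  shows "ground_ratom F (ratom_subst (subst_of l) a)"
proof (cases a)
  case (RA p ts)
  have "\<exists>c\<in>F. trm_subst (subst_of l) t = C c" if "t \<in> set ts" for t
  proof (cases t)
    case (V x)
    then have "(x, alookup l x) \<in> set l" using assms(1) RA that by (intro alookup_mem) auto
    then show ?thesis using V assms(2) by (auto simp: subst_of_def)
  next
    case (C c)
    then show ?thesis using assms(3) RA that by force
  qed
  then show ?thesis using RA by (auto simp: ground_ratom_def)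
qed

lemma ground_prog_props:
  assumes hp: "hybrid_program F Cs P" and Fl: "set Fl = F" and g: "g \<in> set (ground_prog Fl P)"
  shows "fst g \<in> herbrand_base F"
    and "\<forall>l\<in>set (snd (snd g)). lit_atom l \<in> herbrand_base F"
    and "\<exists>c l. fst (snd g) = inst_constr l c \<and> c \<in> Cs \<and> fm_free c \<subseteq> fst ` set l
               \<and> fm_consts c \<subseteq> F \<and> (\<forall>x\<in>set l. snd x \<in> F)"
proof -
  from g obtain r l where r: "r \<in> set P" and l: "l \<in> set (assignments Fl (Suc (enc_rule r)))"
    and ge: "g = ground_rule r l"
    unfolding set_ground_prog by blast
  obtain h c b where re: "r = (h, c, b)" by (cases r) auto
  have keys: "fst ` set l = {..<Suc (enc_rule (h, c, b))}" using assignments_keys l re by auto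
  have vals: "\<forall>x\<in>set l. snd x \<in> F" using l Fl by (simp add: set_assignments)
  have rc: "rule_consts r \<subseteq> F" "c \<in> Cs" using hp r re by (auto simp: hybrid_program_def)
  have hc: "ratom_consts h \<subseteq> F" "fm_consts c \<subseteq> F" "\<forall>l\<in>set b. ratom_consts (lit_atom l) \<subseteq> F"
    using rc re by (auto simp: rule_consts_def)
  have bnd: "\<And>x. x \<in> ratom_vars h \<or> x \<in> fm_free c \<or> (\<exists>l\<in>set b. x \<in> ratom_vars (lit_atom l))
      \<Longrightarrow> x \<in> fst ` set l"
    using rule_var_bound keys by (metis lessThan_iff less_Suc_eq_le)
  show "fst g \<in> herbrand_base F"
    unfolding herbrand_base_def ge re ground_rule_def using bnd vals hc
    by (auto intro!: ground_ratom_subst)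
  show "\<forall>l'\<in>set (snd (snd g)). lit_atom l' \<in> herbrand_base F"
    unfolding herbrand_base_def ge re ground_rule_def using bnd vals hc
    by (auto simp: lit_atom_subst intro!: ground_ratom_subst)
  show "\<exists>c' l'. fst (snd g) = inst_constr l' c' \<and> c' \<in> Cs \<and> fm_free c' \<subseteq> fst ` set l'
      \<and> fm_consts c' \<subseteq> F \<and> (\<forall>x\<in>set l'. snd x \<in> F)"
    using ge re bnd rc hc vals by (auto simp: ground_rule_def)
qed
section \<open>The well-founded model computed by constraint formulas\<close>

abbreviation Fls :: fm where "Fls \<equiv> Neg Tru"

definition conj_body :: "(lit \<Rightarrow> fm) \<Rightarrow> lit list \<Rightarrow> fm" where
  "conj_body val b = foldl (\<lambda>acc l. Conj (val l) acc) Tru b"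

definition lit_formula :: "(ratom \<Rightarrow> fm) \<Rightarrow> (ratom \<Rightarrow> fm) \<Rightarrow> lit \<Rightarrow> fm" where
  "lit_formula d nv l = (case l of Pos x \<Rightarrow> d x | NegL x \<Rightarrow> nv x)"

definition tp_formula :: "hprog \<Rightarrow> (ratom \<Rightarrow> fm) \<Rightarrow> (ratom \<Rightarrow> fm) \<Rightarrow> ratom \<Rightarrow> fm" where
  "tp_formula G nv d a = foldl (\<lambda>acc r. if fst r = a
      then Disj (Conj (fst (snd r)) (conj_body (lit_formula d nv) (snd (snd r)))) acc else acc) Fls G"

definition tp_iter_formula :: "hprog \<Rightarrow> (ratom \<Rightarrow> fm) \<Rightarrow> nat \<Rightarrow> ratom \<Rightarrow> fm" where
  "tp_iter_formula G nv k = (tp_formula G nv ^^ k) (\<lambda>_. Fls)"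

text \<open>A symbolic interpretation: formulas describing its positive and its negative part.
  One symbolic step of Psi acts on it; K bounds the number of heads of G.\<close>
type_synonym sym_interp = "(ratom \<Rightarrow> fm) \<times> (ratom \<Rightarrow> fm)"

definition Psi_formula :: "hprog \<Rightarrow> nat \<Rightarrow> sym_interp \<Rightarrow> sym_interp" where
  "Psi_formula G K s = (tp_iter_formula G (snd s) K, \<lambda>a. Neg (tp_iter_formula G (\<lambda>x. Neg (fst s x)) K a))"

text \<open>The formulas describing the well-founded model of the ground program of P: the code K
  of the ground program bounds its number of rules, and 2K + 2 steps suffice.\<close>
definition wf_formulas :: "nat list \<Rightarrow> hprog \<Rightarrow> sym_interp" where
  "wf_formulas Fl P = (let G = ground_prog Fl P; K = list_encode (map enc_rule G) in
     (Psi_formula G K ^^ (K + K + 2)) (\<lambda>_. Fls, \<lambda>_. Fls))"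

lemma sat_conj_body: "sat M va (conj_body val b) \<longleftrightarrow> (\<forall>l\<in>set b. sat M va (val l))"
proof -
  have "sat M va (foldl (\<lambda>acc l. Conj (val l) acc) acc b) \<longleftrightarrow> sat M va acc \<and> (\<forall>l\<in>set b. sat M va (val l))"
    for acc
    by (induction b arbitrary: acc) auto
  then show ?thesis by (simp add: conj_body_def)
qed

lemma sat_tp_formula: "sat M va (tp_formula G nv d a) \<longleftrightarrow>
  (\<exists>g\<in>set G. fst g = a \<and> sat M va (fst (snd g)) \<and> sat M va (conj_body (lit_formula d nv) (snd (snd g))))"
proof -
  have "sat M va (foldl (\<lambda>acc r. if fst r = a then Disj (Conj (fst (snd r))
      (conj_body (lit_formula d nv) (snd (snd r)))) acc else acc) acc G)
    \<longleftrightarrow> sat M va acc \<or> (\<exists>g\<in>set G. fst g = a \<and> sat M va (fst (snd g))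
      \<and> sat M va (conj_body (lit_formula d nv) (snd (snd g))))" for acc
    by (induction G arbitrary: acc) auto
  then show ?thesis by (simp add: tp_formula_def)
qed

definition selected :: "'d struct \<Rightarrow> (nat \<Rightarrow> 'd) \<Rightarrow> hprog \<Rightarrow> gprog" where
  "selected M va G = {(fst g, snd (snd g)) | g. g \<in> set G \<and> sat M va (fst (snd g))}"

definition over_base :: "ratom set \<Rightarrow> hprog \<Rightarrow> bool" where
  "over_base H G \<longleftrightarrow> (\<forall>g\<in>set G. fst g \<in> H \<and> (\<forall>l\<in>set (snd (snd g)). lit_atom l \<in> H))"

lemma sat_tp_iter_formula:
  assumes base: "over_base H G" and nv: "\<forall>x\<in>H. sat M va (nv x) \<longleftrightarrow> x \<in> N"
  shows "sat M va (tp_iter_formula G nv k a) \<longleftrightarrow> a \<in> (tp (selected M va G) N ^^ k) {}"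
proof (induction k arbitrary: a)
  case 0 then show ?case by (simp add: tp_iter_formula_def)
next
  case (Suc k)
  let ?Q = "selected M va G"
  have lit: "sat M va (lit_formula (tp_iter_formula G nv k) nv l)
      \<longleftrightarrow> (case l of Pos x \<Rightarrow> x \<in> (tp ?Q N ^^ k) {} | NegL x \<Rightarrow> x \<in> N)"
    if "lit_atom l \<in> H" for l
    using that Suc nv by (cases l) (auto simp: lit_formula_def)
  have "sat M va (tp_iter_formula G nv (Suc k) a)
      \<longleftrightarrow> (\<exists>g\<in>set G. fst g = a \<and> sat M va (fst (snd g))
          \<and> (\<forall>l\<in>set (snd (snd g)). sat M va (lit_formula (tp_iter_formula G nv k) nv l)))"
    by (simp add: tp_iter_formula_def sat_tp_formula sat_conj_body)
  also have "\<dots> \<longleftrightarrow> (\<exists>g\<in>set G. fst g = a \<and> sat M va (fst (snd g))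
          \<and> (\<forall>l\<in>set (snd (snd g)). case l of Pos x \<Rightarrow> x \<in> (tp ?Q N ^^ k) {} | NegL x \<Rightarrow> x \<in> N))"
    using lit base unfolding over_base_def by (metis (no_types, lifting))
  also have "\<dots> \<longleftrightarrow> a \<in> tp ?Q N ((tp ?Q N ^^ k) {})"
    unfolding tp_iff selected_def by force
  finally show ?case by simp
qed

lemma sat_Psi_formula_iter:
  assumes base: "over_base H G" and fin: "finite (fst ` selected M va G)"
    and card: "card (fst ` selected M va G) \<le> K"
  shows "\<forall>a\<in>H. (sat M va (fst ((Psi_formula G K ^^ j) (\<lambda>_. Fls, \<lambda>_. Fls)) a)
                    \<longleftrightarrow> Pos a \<in> Psi_iter H (selected M va G) j)
            \<and> (sat M va (snd ((Psi_formula G K ^^ j) (\<lambda>_. Fls, \<lambda>_. Fls)) a)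
                    \<longleftrightarrow> NegL a \<in> Psi_iter H (selected M va G) j)"
proof (induction j)
  case 0 then show ?case by simp
next
  case (Suc j)
  let ?Q = "selected M va G"
  let ?s = "(Psi_formula G K ^^ j) (\<lambda>_. Fls, \<lambda>_. Fls)"
  let ?I = "Psi_iter H ?Q j"
  have neg_t: "\<forall>x\<in>H. sat M va (snd ?s x) \<longleftrightarrow> x \<in> {x. NegL x \<in> ?I}" using Suc by blast
  have neg_tu: "\<forall>x\<in>H. sat M va (Neg (fst ?s x)) \<longleftrightarrow> x \<in> {x. x \<in> H \<and> Pos x \<notin> ?I}" using Suc by auto
  show ?case
  proof (intro ballI conjI)
    fix a assume aH: "a \<in> H"
    have "sat M va (fst (Psi_formula G K ?s) a) \<longleftrightarrow> sat M va (tp_iter_formula G (snd ?s) K a)"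
      by (simp add: Psi_formula_def)
    also have "\<dots> \<longleftrightarrow> a \<in> (tp ?Q {x. NegL x \<in> ?I} ^^ K) {}"
      by (rule sat_tp_iter_formula[OF base neg_t])
    also have "\<dots> \<longleftrightarrow> Pos a \<in> Psi H ?Q ?I"
      unfolding Psi_Pos prog_t_neg using least_model_prog_neg[OF fin card] aH by blast
    finally show "sat M va (fst ((Psi_formula G K ^^ Suc j) (\<lambda>_. Fls, \<lambda>_. Fls)) a)
        \<longleftrightarrow> Pos a \<in> Psi_iter H ?Q (Suc j)" by simp
  next
    fix a assume aH: "a \<in> H"
    have "sat M va (snd (Psi_formula G K ?s) a)
        \<longleftrightarrow> \<not> sat M va (tp_iter_formula G (\<lambda>x. Neg (fst ?s x)) K a)"
      by (simp add: Psi_formula_def)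
    also have "\<dots> \<longleftrightarrow> a \<notin> (tp ?Q {x. x \<in> H \<and> Pos x \<notin> ?I} ^^ K) {}"
      using sat_tp_iter_formula[OF base neg_tu] by simp
    also have "\<dots> \<longleftrightarrow> NegL a \<in> Psi H ?Q ?I"
      unfolding Psi_NegL prog_tu_neg using least_model_prog_neg[OF fin card] aH by blast
    finally show "sat M va (snd ((Psi_formula G K ^^ Suc j) (\<lambda>_. Fls, \<lambda>_. Fls)) a)
        \<longleftrightarrow> NegL a \<in> Psi_iter H ?Q (Suc j)" by simp
  qed
qed

locale constraint_class =
  fixes Cs :: "fm set"
  assumes C_true: "Tru \<in> Cs"
    and C_eq: "\<forall>s t. Eq s t \<in> Cs"
    and C_neg: "\<forall>f\<in>Cs. Neg f \<in> Cs"
    and C_conj: "\<forall>f\<in>Cs. \<forall>g\<in>Cs. Conj f g \<in> Cs"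
    and C_disj: "\<forall>f\<in>Cs. \<forall>g\<in>Cs. Disj f g \<in> Cs"
    and C_ex: "\<forall>x. \<forall>f\<in>Cs. Ex x f \<in> Cs"
begin

abbreviation closed :: "nat set \<Rightarrow> fm \<Rightarrow> bool" where
  "closed F f \<equiv> f \<in> closed_constraints F Cs"

lemma closed_Tru: "closed F Tru"
  using C_true by (simp add: closed_constraints_def)

lemma closed_Neg: "closed F f \<Longrightarrow> closed F (Neg f)"
  using C_neg by (simp add: closed_constraints_def)

lemma closed_Conj: "closed F f \<Longrightarrow> closed F g \<Longrightarrow> closed F (Conj f g)"
  using C_conj by (simp add: closed_constraints_def)

lemma closed_Disj: "closed F f \<Longrightarrow> closed F g \<Longrightarrow> closed F (Disj f g)"
  using C_disj by (simp add: closed_constraints_def)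

lemma closed_conj_body: "\<forall>l. closed F (val l) \<Longrightarrow> closed F (conj_body val b)"
proof -
  assume v: "\<forall>l. closed F (val l)"
  have "closed F acc \<Longrightarrow> closed F (foldl (\<lambda>acc l. Conj (val l) acc) acc b)" for acc
    using v by (induction b arbitrary: acc) (auto intro: closed_Conj)
  then show ?thesis by (simp add: conj_body_def closed_Tru)
qed

lemma closed_tp_formula:
  assumes G: "\<forall>g\<in>set G. closed F (fst (snd g))" and d: "\<forall>a. closed F (d a)" and nv: "\<forall>a. closed F (nv a)"
  shows "closed F (tp_formula G nv d a)"
proof -
  have lit: "\<forall>l. closed F (lit_formula d nv l)"
    using d nv by (auto simp: lit_formula_def split: lit.splits)
  have "closed F acc \<Longrightarrow> set G' \<subseteq> set G \<Longrightarrow> closed F (foldl (\<lambda>acc r. if fst r = a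
      then Disj (Conj (fst (snd r)) (conj_body (lit_formula d nv) (snd (snd r)))) acc else acc) acc G')"
    for acc G'
    using G lit by (induction G' arbitrary: acc) (auto intro!: closed_Disj closed_Conj closed_conj_body)
  then show ?thesis by (simp add: tp_formula_def closed_Neg closed_Tru)
qed

lemma closed_Psi_formula_iter:
  assumes G: "\<forall>g\<in>set G. closed F (fst (snd g))"
  shows "(\<forall>a. closed F (fst ((Psi_formula G K ^^ n) (\<lambda>_. Fls, \<lambda>_. Fls)) a))
       \<and> (\<forall>a. closed F (snd ((Psi_formula G K ^^ n) (\<lambda>_. Fls, \<lambda>_. Fls)) a))"
proof -
  have tp_iter: "closed F (tp_iter_formula G nv k a)" if "\<forall>a. closed F (nv a)" for nv k a
  proof -
    have "\<forall>a. closed F ((tp_formula G nv ^^ k) (\<lambda>_. Fls) a)"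
      by (induction k) (auto intro: closed_Neg closed_Tru closed_tp_formula[OF G _ that])
    then show ?thesis by (simp add: tp_iter_formula_def)
  qed
  show ?thesis
    by (induction n) (auto simp: Psi_formula_def intro!: tp_iter closed_Neg closed_Tru)
qed

lemma closed_inst_constr:
  assumes "c \<in> Cs" "fm_free c \<subseteq> fst ` set l" "fm_consts c \<subseteq> F" "\<forall>x\<in>set l. snd x \<in> F"
  shows "closed F (inst_constr l c)"
  using assms inst_constr_closed_under[OF C_eq C_conj C_ex]
  by (auto simp: closed_constraints_def fm_free_inst_constr fm_consts_inst_constr)

end

lemma wf_formulas_correct:
  assumes cs: "constraint_class Cs" and hp: "hybrid_program F Cs P"
    and Fl: "set Fl = F" "Fl \<noteq> []" and A: "ground_ratom F A"
  shows "fst (wf_formulas Fl P) A \<in> closed_constraints F Cs"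
    and "snd (wf_formulas Fl P) A \<in> closed_constraints F Cs"
    and "sat M va (fst (wf_formulas Fl P) A) \<longleftrightarrow> Pos A \<in> WF (herbrand_base F) (reduct F P M)"
    and "sat M va (snd (wf_formulas Fl P) A) \<longleftrightarrow> NegL A \<in> WF (herbrand_base F) (reduct F P M)"
proof -
  let ?G = "ground_prog Fl P"
  let ?K = "list_encode (map enc_rule ?G)"
  let ?H = "herbrand_base F"
  have unfold: "wf_formulas Fl P = (Psi_formula ?G ?K ^^ (?K + ?K + 2)) (\<lambda>_. Fls, \<lambda>_. Fls)"
    by (simp add: wf_formulas_def Let_def)
  have base: "over_base ?H ?G" using ground_prog_props(1,2)[OF hp Fl(1)] by (auto simp: over_base_def)
  have closed_G: "\<forall>g\<in>set ?G. fst (snd g) \<in> closed_constraints F Cs"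
    using ground_prog_props(3)[OF hp Fl(1)] constraint_class.closed_inst_constr[OF cs] by fastforce
  have eval: "\<forall>g\<in>set ?G. holds M (fst (snd g)) = sat M va (fst (snd g))"
    using closed_G holds_closed[of _ M va] by (simp add: closed_constraints_def)
  have "reduct F P M = {(fst g, snd (snd g)) | g. g \<in> set ?G \<and> holds M (fst (snd g))}"
    using reduct_ground_prog[OF Fl(2), of P M] Fl(1) by simp
  also have "\<dots> = selected M va ?G"
    unfolding selected_def by (rule Collect_cong) (use eval in blast)
  finally have reduct: "reduct F P M = selected M va ?G" .
  have heads: "fst ` selected M va ?G \<subseteq> fst ` set ?G"
    unfolding selected_def by force
  have fin: "finite (fst ` selected M va ?G)" using heads finite_subset by blast
  have "card (fst ` selected M va ?G) \<le> card (fst ` set ?G)" using heads by (intro card_mono) auto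
  also have "\<dots> \<le> length ?G" using card_image_le[of "set ?G" fst] card_length[of ?G] by simp
  also have "\<dots> \<le> ?K" using list_encode_ge_length[of "map enc_rule ?G"] by simp
  finally have card: "card (fst ` selected M va ?G) \<le> ?K" .
  have AH: "A \<in> ?H" using A by (simp add: herbrand_base_def)
  have wf: "WF ?H (selected M va ?G) = Psi_iter ?H (selected M va ?G) (?K + ?K + 2)"
    by (rule WF_eq_Psi_iter[OF fin card])
  note sem = sat_Psi_formula_iter[OF base fin card, of "?K + ?K + 2", THEN bspec, OF AH]
  show "sat M va (fst (wf_formulas Fl P) A) \<longleftrightarrow> Pos A \<in> WF ?H (reduct F P M)"
       "sat M va (snd (wf_formulas Fl P) A) \<longleftrightarrow> NegL A \<in> WF ?H (reduct F P M)"
    using sem unfolding unfold reduct wf by blast+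
  show "fst (wf_formulas Fl P) A \<in> closed_constraints F Cs"
       "snd (wf_formulas Fl P) A \<in> closed_constraints F Cs"
    using constraint_class.closed_Psi_formula_iter[OF cs closed_G] unfolding unfold by blast+
qed
section \<open>A language of total recursive expressions\<close>

text \<open>Expressions over a list of natural-number arguments: zero, successor, projection,
  composition, primitive recursion (Iter n i b iterates b, which sees the accumulator and the
  counter in front of the arguments, n times starting from i) and minimisation.\<close>
datatype ex = Z | S ex | Var nat | App ex "ex list" | Iter ex ex ex | Min ex

fun eval :: "ex \<Rightarrow> nat list \<Rightarrow> nat" where
  "eval Z xs = 0"
| "eval (S e) xs = Suc (eval e xs)"
| "eval (Var i) xs = xs ! i"
| "eval (App g es) xs = eval g (map (\<lambda>e. eval e xs) es)"
| "eval (Iter en ei eb) xs = rec_nat (eval ei xs) (\<lambda>k v. eval eb (v # k # xs)) (eval en xs)"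
| "eval (Min eb) xs = (LEAST m. eval eb (m # xs) = 0)"

text \<open>wfe n e: e uses at most n arguments and every minimisation has a zero, so that e
  denotes a total function; then it is computed by a mu-recursive function.\<close>
fun wfe :: "nat \<Rightarrow> ex \<Rightarrow> bool" where
  "wfe n Z = True"
| "wfe n (S e) = wfe n e"
| "wfe n (Var i) = (i < n)"
| "wfe n (App g es) = (wfe (length es) g \<and> (\<forall>e\<in>set es. wfe n e))"
| "wfe n (Iter en ei eb) = (wfe n en \<and> wfe n ei \<and> wfe (Suc (Suc n)) eb)"
| "wfe n (Min eb) = (wfe (Suc n) eb \<and> (\<forall>xs. length xs = n \<longrightarrow> (\<exists>m. eval eb (m # xs) = 0)))"

definition computes :: "nat \<Rightarrow> recf \<Rightarrow> ex \<Rightarrow> bool" where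
  "computes n r e \<longleftrightarrow> (\<forall>xs. length xs = n \<longrightarrow> recf_eval r xs (eval e xs))"

lemma list_choice:
  assumes "\<forall>e\<in>set es. \<exists>r. P r e"
  shows "\<exists>rs. length rs = length es \<and> (\<forall>i<length es. P (rs ! i) (es ! i))"
  using assms
proof (induction es)
  case Nil then show ?case by simp
next
  case (Cons e es)
  then obtain r where "P r e" by auto
  moreover from Cons obtain rs where "length rs = length es" "\<forall>i<length es. P (rs ! i) (es ! i)" by auto
  ultimately show ?case
    by (intro exI[of _ "r # rs"]) (auto simp: nth_Cons split: nat.split)
qed

lemma primrec_eval:
  assumes "\<forall>xs. length xs = n \<longrightarrow> recf_eval ri xs (eval ei xs)"
    and "\<forall>xs. length xs = Suc (Suc n) \<longrightarrow> recf_eval rb xs (eval eb xs)"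
    and "length xs = n"
  shows "recf_eval (PrimRec ri rb) (k # xs) (rec_nat (eval ei xs) (\<lambda>k v. eval eb (v # k # xs)) k)"
proof (induction k)
  case 0 then show ?case using assms by (auto intro: recf_eval.prim0)
next
  case (Suc k) then show ?case using assms by (auto intro: recf_eval.primS)
qed

lemma compile: "wfe n e \<Longrightarrow> \<exists>r. computes n r e"
proof (induction e arbitrary: n)
  case Z then show ?case by (auto simp: computes_def intro: recf_eval.zero)
next
  case (S e)
  then obtain r where r: "computes n r e" by auto
  have "computes n (Comp Succ [r]) (S e)"
    unfolding computes_def
  proof (intro allI impI)
    fix xs :: "nat list" assume "length xs = n"
    then show "recf_eval (Comp Succ [r]) xs (eval (S e) xs)"
      using r by (auto simp: computes_def intro!: recf_eval.comp[where ys="[eval e xs]"] recf_eval.succ)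
  qed
  then show ?case by blast
next
  case (Var i)
  then have "computes n (Proj i) (Var i)" by (auto simp: computes_def intro: recf_eval.proj)
  then show ?case by blast
next
  case (App g es)
  then obtain rg where rg: "computes (length es) rg g" by (meson wfe.simps(4))
  from App have "\<forall>e\<in>set es. \<exists>r. computes n r e" by auto
  from list_choice[OF this] obtain rs where rs: "length rs = length es"
    "\<forall>i<length es. computes n (rs ! i) (es ! i)" by auto
  have "computes n (Comp rg rs) (App g es)"
    unfolding computes_def
  proof (intro allI impI)
    fix xs :: "nat list" assume "length xs = n"
    then show "recf_eval (Comp rg rs) xs (eval (App g es) xs)"
      using rs rg by (auto simp: computes_def intro!: recf_eval.comp[where ys="map (\<lambda>e. eval e xs) es"])
  qed
  then show ?case by blast
next
  case (Iter en ei eb)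
  then obtain rn ri rb where r: "computes n rn en" "computes n ri ei" "computes (Suc (Suc n)) rb eb"
    by (metis wfe.simps(5))
  have "computes n (Comp (PrimRec ri rb) (rn # map Proj [0..<n])) (Iter en ei eb)"
    unfolding computes_def
  proof (intro allI impI)
    fix xs :: "nat list" assume len: "length xs = n"
    have pr: "recf_eval (PrimRec ri rb) (eval en xs # xs) (eval (Iter en ei eb) xs)"
      using primrec_eval[of n ri ei rb eb xs "eval en xs"] r len by (simp add: computes_def)
    show "recf_eval (Comp (PrimRec ri rb) (rn # map Proj [0..<n])) xs (eval (Iter en ei eb) xs)"
      by (rule recf_eval.comp[where ys="eval en xs # xs"])
        (use len r pr in \<open>auto simp: computes_def nth_Cons intro: recf_eval.proj split: nat.split\<close>)
  qed
  then show ?case by blast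
next
  case (Min eb)
  then obtain rb where rb: "computes (Suc n) rb eb" by auto
  have "computes n (Mu rb) (Min eb)"
    unfolding computes_def
  proof (intro allI impI)
    fix xs :: "nat list" assume len: "length xs = n"
    with Min obtain m where m: "eval eb (m # xs) = 0" by auto
    let ?l = "LEAST m. eval eb (m # xs) = 0"
    have l0: "eval eb (?l # xs) = 0" using m by (rule LeastI)
    have lt: "\<forall>k<?l. eval eb (k # xs) \<noteq> 0" using not_less_Least by blast
    show "recf_eval (Mu rb) xs (eval (Min eb) xs)"
      unfolding eval.simps
    proof (rule recf_eval.mu)
      show "recf_eval rb (?l # xs) 0" using rb len l0 by (metis computes_def length_Cons)
      show "\<forall>k<?l. \<exists>v. recf_eval rb (k # xs) (Suc v)"
        using rb len lt by (metis computes_def length_Cons not0_implies_Suc)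
    qed
  qed
  then show ?case by blast
qed

definition e_add :: ex where "e_add = Iter (Var 1) (Var 0) (S (Var 0))"
lemma wf_add[simp]: "wfe (Suc (Suc 0)) e_add" by (simp add: e_add_def)
lemma ev_add[simp]: "eval e_add [a, b] = a + b"
  by (simp add: e_add_def, induction b) auto

definition e_pred :: ex where "e_pred = Iter (Var 0) Z (Var 1)"
lemma wf_pred[simp]: "wfe (Suc 0) e_pred" by (simp add: e_pred_def)
lemma ev_pred[simp]: "eval e_pred [a] = a - 1"
  by (simp add: e_pred_def, cases a) auto

definition e_sub :: ex where "e_sub = Iter (Var 1) (Var 0) (App e_pred [Var 0])"
lemma wf_sub[simp]: "wfe (Suc (Suc 0)) e_sub" by (simp add: e_sub_def)
lemma ev_sub[simp]: "eval e_sub [a, b] = a - b"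
  by (simp add: e_sub_def, induction b) auto

definition e_ifz :: ex where "e_ifz = Iter (Var 0) (Var 1) (Var 4)"
lemma wf_ifz[simp]: "wfe (Suc (Suc (Suc 0))) e_ifz" by (simp add: e_ifz_def)
lemma ev_ifz[simp]: "eval e_ifz [a, b, c] = (if a = 0 then b else c)"
  by (simp add: e_ifz_def, cases a) auto

definition e_tri :: ex where "e_tri = Iter (Var 0) Z (App e_add [Var 0, S (Var 1)])"
lemma wf_tri[simp]: "wfe (Suc 0) e_tri" by (simp add: e_tri_def)
lemma ev_tri[simp]: "eval e_tri [a] = triangle a"
  by (simp add: e_tri_def, induction a) auto

lemma triangle_mono: "m \<le> n \<Longrightarrow> triangle m \<le> triangle n"
  by (induction n) (auto simp: le_Suc_eq)

definition e_dg :: ex where "e_dg = Min (App e_sub [S (Var 1), App e_tri [S (Var 0)]])"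
lemma wf_dg[simp]: "wfe (Suc 0) e_dg"
proof -
  have "\<exists>m. z \<le> triangle m + m" for z using triangle_ge[of z] by (intro exI[of _ z]) simp
  then show ?thesis by (auto simp: e_dg_def)
qed

lemma dg_char: "(LEAST d. z \<le> triangle d + d) = fst (prod_decode z) + snd (prod_decode z)"
proof -
  obtain a b where ab: "prod_decode z = (a, b)" by fastforce
  have z: "z = triangle (a + b) + a" using prod_decode_inverse[of z] ab by (simp add: prod_encode_def)
  have "(LEAST d. z \<le> triangle d + d) = a + b"
  proof (rule Least_equality)
    show "z \<le> triangle (a + b) + (a + b)" using z by simp
  next
    fix d assume "z \<le> triangle d + d"
    then have "z < triangle (Suc d)" by simp
    show "a + b \<le> d"
    proof (rule ccontr)
      assume "\<not> a + b \<le> d"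
      then have "triangle (Suc d) \<le> triangle (a + b)" by (intro triangle_mono) simp
      with \<open>z < triangle (Suc d)\<close> z show False by simp
    qed
  qed
  then show ?thesis using ab by simp
qed

lemma ev_dg[simp]: "eval e_dg [z] = fst (prod_decode z) + snd (prod_decode z)"
  by (simp add: e_dg_def dg_char)

definition e_fst :: ex where "e_fst = App e_sub [Var 0, App e_tri [App e_dg [Var 0]]]"
lemma wf_fst[simp]: "wfe (Suc 0) e_fst" by (simp add: e_fst_def)
lemma ev_fst[simp]: "eval e_fst [z] = fst (prod_decode z)"
proof -
  obtain a b where ab: "prod_decode z = (a, b)" by fastforce
  have z: "z = triangle (a + b) + a" using prod_decode_inverse[of z] ab by (simp add: prod_encode_def)
  show ?thesis by (simp add: e_fst_def ab) (simp add: z)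
qed

definition e_snd :: ex where "e_snd = App e_sub [App e_dg [Var 0], App e_fst [Var 0]]"
lemma wf_snd[simp]: "wfe (Suc 0) e_snd" by (simp add: e_snd_def)
lemma ev_snd[simp]: "eval e_snd [z] = snd (prod_decode z)"
  by (simp add: e_snd_def)

definition e_pair :: ex where "e_pair = App e_add [App e_tri [App e_add [Var 0, Var 1]], Var 0]"
lemma wf_pair[simp]: "wfe (Suc (Suc 0)) e_pair" by (simp add: e_pair_def)
lemma ev_pair[simp]: "eval e_pair [a, b] = prod_encode (a, b)"
  by (simp add: e_pair_def prod_encode_def)

definition e_eq :: ex where "e_eq = App e_add [App e_sub [Var 0, Var 1], App e_sub [Var 1, Var 0]]"
lemma wf_eq[simp]: "wfe (Suc (Suc 0)) e_eq" by (simp add: e_eq_def)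
lemma ev_eq[simp]: "(eval e_eq [a, b] = 0) = (a = b)"
  by (simp add: e_eq_def) arith

text \<open>Lists are coded by list_encode: [] is 0, x # xs is 1 + the pair code of (x, xs).\<close>
definition e_cons :: ex where "e_cons = S (App e_pair [Var 0, Var 1])"
lemma wf_cons[simp]: "wfe (Suc (Suc 0)) e_cons" by (simp add: e_cons_def)
lemma ev_cons[simp]: "eval e_cons [a, list_encode l] = list_encode (a # l)"
  by (simp add: e_cons_def)

definition e_hd :: ex where "e_hd = App e_fst [App e_pred [Var 0]]"
lemma wf_hd[simp]: "wfe (Suc 0) e_hd" by (simp add: e_hd_def)
lemma ev_hd[simp]: "eval e_hd [list_encode (a # l)] = a"
  by (simp add: e_hd_def)

definition e_tl :: ex where "e_tl = App e_snd [App e_pred [Var 0]]"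
lemma wf_tl[simp]: "wfe (Suc 0) e_tl" by (simp add: e_tl_def)
lemma ev_tl[simp]: "eval e_tl [list_encode (a # l)] = list_encode l"
  by (simp add: e_tl_def)

text \<open>Head and tail of arbitrary codes, needed inside folds before the list is known.\<close>
lemma ev_hd_gen: "eval e_hd [z] = fst (prod_decode (z - 1))" by (simp add: e_hd_def)
lemma ev_tl_gen: "eval e_tl [z] = snd (prod_decode (z - 1))" by (simp add: e_tl_def)

text \<open>Left fold over a coded list: e_fold g [xs, a, p] folds g (element, accumulator,
  parameter p) over xs; the state (remaining list, accumulator) is iterated length-many times,
  and the code of a list bounds its length.\<close>
definition e_fold :: "ex \<Rightarrow> ex" where
  "e_fold g = App e_snd [Iter (Var 0) (App e_pair [Var 0, Var 1])
     (App e_ifz [App e_fst [Var 0], Var 0,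
        App e_pair [App e_tl [App e_fst [Var 0]], App g [App e_hd [App e_fst [Var 0]], App e_snd [Var 0], Var 4]]])]"

lemma wf_fold[simp]: "wfe (Suc (Suc (Suc 0))) g \<Longrightarrow> wfe (Suc (Suc (Suc 0))) (e_fold g)"
  by (simp add: e_fold_def)

lemma ev_fold[simp]: "eval (e_fold g) [list_encode xs, a, p] = foldl (\<lambda>acc x. eval g [x, acc, p]) a xs"
proof -
  let ?f = "\<lambda>acc x. eval g [x, acc, p]"
  let ?st = "rec_nat (prod_encode (list_encode xs, a))
     (\<lambda>k v. eval (App e_ifz [App e_fst [Var 0], Var 0,
        App e_pair [App e_tl [App e_fst [Var 0]], App g [App e_hd [App e_fst [Var 0]], App e_snd [Var 0], Var 4]]])
       [v, k, list_encode xs, a, p])"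
  have st: "?st k = prod_encode (list_encode (drop k xs), foldl ?f a (take k xs))" for k
  proof (induction k)
    case 0 then show ?case by simp
  next
    case (Suc k)
    show ?case
    proof (cases "k < length xs")
      case True
      then have d: "drop k xs = xs ! k # drop (Suc k) xs" by (simp add: Cons_nth_drop_Suc)
      have t: "take (Suc k) xs = take k xs @ [xs ! k]" using True by (simp add: take_Suc_conv_app_nth)
      have "list_encode (drop k xs) \<noteq> 0" using d by simp
      then show ?thesis using Suc d t by (simp add: d ev_hd_gen ev_tl_gen)
    next
      case False
      then show ?thesis using Suc by simp
    qed
  qed
  have "?st (list_encode xs) = prod_encode (0, foldl ?f a xs)"
    using st[of "list_encode xs"] list_encode_ge_length[of xs] by simp
  then show ?thesis by (simp add: e_fold_def)
qed

definition e_range :: "ex \<Rightarrow> ex" where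
  "e_range g = Iter (Var 0) (Var 1) (App g [Var 1, Var 0, Var 4])"
lemma wf_range[simp]: "wfe (Suc (Suc (Suc 0))) g \<Longrightarrow> wfe (Suc (Suc (Suc 0))) (e_range g)"
  by (simp add: e_range_def)
lemma ev_range[simp]: "eval (e_range g) [n, a, p] = foldl (\<lambda>acc i. eval g [i, acc, p]) a [0..<n]"
  by (simp add: e_range_def, induction n) auto

definition e_iter :: "ex \<Rightarrow> ex" where
  "e_iter g = Iter (Var 0) (Var 1) (App g [Var 0, Var 4])"
lemma wf_iter[simp]: "wfe (Suc (Suc 0)) g \<Longrightarrow> wfe (Suc (Suc (Suc 0))) (e_iter g)"
  by (simp add: e_iter_def)
lemma ev_iter[simp]: "eval (e_iter g) [n, a, p] = ((\<lambda>v. eval g [v, p]) ^^ n) a"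
  by (simp add: e_iter_def, induction n) auto

definition e_lookup :: ex where
  "e_lookup = App (e_fold (App e_ifz [App e_eq [App e_fst [Var 0], Var 2], App e_snd [Var 0], Var 1])) [Var 0, Z, Var 1]"
lemma wf_lookup[simp]: "wfe (Suc (Suc 0)) e_lookup" by (simp add: e_lookup_def)
lemma ev_lookup[simp]: "eval e_lookup [list_encode (map prod_encode tbl), k] = alookup tbl k"
proof -
  have "foldl (\<lambda>acc x. if fst (prod_decode x) = k then snd (prod_decode x) else acc) b (map prod_encode tbl)
    = foldl (\<lambda>acc x. if fst x = k then snd x else acc) b tbl" for b
    by (induction tbl arbitrary: b) auto
  then show ?thesis by (simp add: e_lookup_def alookup_def) 
qed

lemma list_encode_Nil: "list_encode [] = 0" by simp
declare list_encode.simps[simp del]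
declare list_encode_Nil[simp]

fun e_num :: "nat \<Rightarrow> ex" where
  "e_num 0 = Z" | "e_num (Suc k) = S (e_num k)"
lemma wf_num[simp]: "wfe n (e_num k)" by (induction k) auto
lemma ev_num[simp]: "eval (e_num k) xs = k" by (induction k) auto

lemma foldl_cons_enc: "foldl (\<lambda>acc x. eval e_cons [f x, acc]) (list_encode ys) xs = list_encode (rev (map f xs) @ ys)"
  by (induction xs arbitrary: ys) auto

definition e_mapr :: "ex \<Rightarrow> ex" where
  "e_mapr g = App (e_fold (App e_cons [App g [Var 0, Var 2], Var 1])) [Var 0, Z, Var 1]"
lemma wf_mapr[simp]: "wfe (Suc (Suc 0)) g \<Longrightarrow> wfe (Suc (Suc 0)) (e_mapr g)"
  by (simp add: e_mapr_def)
lemma ev_mapr[simp]: "eval (e_mapr g) [list_encode xs, p] = list_encode (rev (map (\<lambda>x. eval g [x, p]) xs))"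
  using foldl_cons_enc[of "\<lambda>x. eval g [x, p]" "[]" xs] by (simp add: e_mapr_def)

definition e_rev :: ex where "e_rev = App (e_mapr (Var 0)) [Var 0, Z]"
lemma wf_rev[simp]: "wfe (Suc 0) e_rev" by (simp add: e_rev_def)
lemma ev_rev[simp]: "eval e_rev [list_encode xs] = list_encode (rev xs)"
  by (simp add: e_rev_def)

definition e_map :: "ex \<Rightarrow> ex" where "e_map g = App e_rev [App (e_mapr g) [Var 0, Var 1]]"
lemma wf_map[simp]: "wfe (Suc (Suc 0)) g \<Longrightarrow> wfe (Suc (Suc 0)) (e_map g)"
  by (simp add: e_map_def)
lemma ev_map[simp]: "eval (e_map g) [list_encode xs, p] = list_encode (map (\<lambda>x. eval g [x, p]) xs)"
  by (simp add: e_map_def rev_map)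

lemma fold_mirror:
  assumes "\<And>x acc. x \<in> set xs \<Longrightarrow> eval g [enc x, encA acc, p] = encA (f acc x)"
  shows "eval (e_fold g) [list_encode (map enc xs), encA a, p] = encA (foldl f a xs)"
proof -
  have "foldl (\<lambda>acc y. eval g [y, acc, p]) (encA a) (map enc xs) = encA (foldl f a xs)"
    using assms by (induction xs arbitrary: a) auto
  then show ?thesis by simp
qed

definition encl :: "(nat \<times> nat) list \<Rightarrow> nat" where "encl l = list_encode (map prod_encode l)"
definition encL :: "(nat \<times> nat) list list \<Rightarrow> nat" where "encL L = list_encode (map encl L)"

definition g_extend_all :: ex where "g_extend_all = App e_cons [App e_cons [Var 2, Var 0], Var 1]"
lemma wf_g_extend_all[simp]: "wfe (Suc (Suc (Suc 0))) g_extend_all" by (simp add: g_extend_all_def)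
lemma ev_extend_all: "eval (e_fold g_extend_all) [encL L, encL acc, prod_encode (k, c)] = encL (extend_all k c acc L)"
  unfolding encL_def extend_all_def
  by (rule fold_mirror) (simp add: g_extend_all_def encl_def)

definition g_extend_var :: ex where
  "g_extend_var = App (e_fold g_extend_all) [App e_snd [Var 2], Var 1, App e_pair [App e_fst [Var 2], Var 0]]"
lemma wf_g_extend_var[simp]: "wfe (Suc (Suc (Suc 0))) g_extend_var" by (simp add: g_extend_var_def)
lemma encL_Nil: "encL [] = 0" by (simp add: encL_def)
lemma ev_extend_var: "eval (e_fold g_extend_var) [list_encode Fl, 0, prod_encode (k, encL L)] = encL (extend_var Fl k L)"
proof -
  have "eval (e_fold g_extend_var) [list_encode (map id Fl), encL [], prod_encode (k, encL L)] = encL (extend_var Fl k L)"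
    unfolding extend_var_def
    by (rule fold_mirror) (simp add: g_extend_var_def ev_extend_all)
  then show ?thesis by (simp add: encL_Nil)
qed

definition g_assignments :: "nat list \<Rightarrow> ex" where
  "g_assignments Fl = App (e_fold g_extend_var) [e_num (list_encode Fl), Z, App e_pair [Var 0, Var 1]]"
lemma wf_g_assignments[simp]: "wfe (Suc (Suc (Suc 0))) (g_assignments Fl)" by (simp add: g_assignments_def)

definition e_assignments :: "nat list \<Rightarrow> ex" where
  "e_assignments Fl = App (e_range (g_assignments Fl)) [Var 0, e_num (encL [[]]), Z]"
lemma wf_assignments[simp]: "wfe (Suc 0) (e_assignments Fl)" by (simp add: e_assignments_def)
lemma ev_assignments[simp]: "eval (e_assignments Fl) [n] = encL (assignments Fl n)"
proof -
  have "foldl (\<lambda>acc i. eval (g_assignments Fl) [i, acc, 0]) (encL L) xs = encL (foldl (\<lambda>L k. extend_var Fl k L) L xs)" for L xs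
  proof (induction xs arbitrary: L)
    case Nil then show ?case by simp
  next
    case (Cons x xs)
    have "eval (g_assignments Fl) [x, encL L, 0] = encL (extend_var Fl x L)"
      using ev_extend_var[of Fl x L] by (simp add: g_assignments_def)
    then show ?case using Cons by simp
  qed
  then show ?thesis by (simp add: e_assignments_def assignments_def)
qed

text \<open>Singleton lists, whose tail code 0 is not literally list_encode [].\<close>
lemma ev_cons0[simp]: "eval e_cons [a, 0] = list_encode [a]"
  using ev_cons[of a "[]"] by simp

lemma enc_rule_simp[simp]: "enc_rule (h, c, b) = prod_encode (enc_ratom h, prod_encode (enc_fm c, list_encode (map enc_lit b)))"
  by (simp add: enc_rule_def)

text \<open>The atoms occurring in A and in the ground program G (with repetitions); the symbolic
  interpretations are stored as tables indexed by them.\<close>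
definition atom_list :: "ratom \<Rightarrow> hprog \<Rightarrow> ratom list" where
  "atom_list A G = foldl (\<lambda>acc r. foldl (\<lambda>acc l. lit_atom l # acc) (fst r # acc) (snd (snd r))) [A] G"

definition e_trm_subst :: ex where
  "e_trm_subst = App e_ifz [App e_fst [Var 0], App e_pair [e_num 1, App e_lookup [Var 1, App e_snd [Var 0]]], Var 0]"
lemma wf_trm_subst[simp]: "wfe (Suc (Suc 0)) e_trm_subst" by (simp add: e_trm_subst_def)
lemma ev_trm_subst[simp]: "eval e_trm_subst [enc_trm t, encl l] = enc_trm (trm_subst (subst_of l) t)"
  by (cases t) (simp_all add: e_trm_subst_def encl_def subst_of_def)

definition e_ratom_subst :: ex where
  "e_ratom_subst = App e_pair [App e_fst [Var 0], App (e_map e_trm_subst) [App e_snd [Var 0], Var 1]]"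
lemma wf_ratom_subst[simp]: "wfe (Suc (Suc 0)) e_ratom_subst" by (simp add: e_ratom_subst_def)
lemma ev_ratom_subst[simp]: "eval e_ratom_subst [enc_ratom a, encl l] = enc_ratom (ratom_subst (subst_of l) a)"
  by (cases a) (simp add: e_ratom_subst_def comp_def)

definition e_lit_subst :: ex where
  "e_lit_subst = App e_pair [App e_fst [Var 0], App e_ratom_subst [App e_snd [Var 0], Var 1]]"
lemma wf_lit_subst[simp]: "wfe (Suc (Suc 0)) e_lit_subst" by (simp add: e_lit_subst_def)
lemma ev_lit_subst[simp]: "eval e_lit_subst [enc_lit x, encl l] = enc_lit (lit_subst (subst_of l) x)"
  by (cases x) (simp_all add: e_lit_subst_def)

text \<open>The closed constraint inst_constr l c: each binding adds the code of
  \<open>\<exists>x. (x = c \<and> _)\<close>.\<close>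
definition g_inst_constr :: ex where
  "g_inst_constr = App e_pair [e_num 6, App e_pair [App e_fst [Var 0], App e_pair [e_num 4,
     App e_pair [App e_pair [e_num 1, App e_pair [App e_pair [e_num 0, App e_fst [Var 0]],
       App e_pair [e_num 1, App e_snd [Var 0]]]], Var 1]]]]"
lemma wf_g_inst_constr[simp]: "wfe (Suc (Suc (Suc 0))) g_inst_constr" by (simp add: g_inst_constr_def)
definition e_inst_constr :: ex where "e_inst_constr = App (e_fold g_inst_constr) [Var 0, Var 1, Z]"
lemma wf_inst_constr[simp]: "wfe (Suc (Suc 0)) e_inst_constr" by (simp add: e_inst_constr_def)
lemma ev_inst_constr[simp]: "eval e_inst_constr [encl l, enc_fm c] = enc_fm (inst_constr l c)"
proof -
  have "eval (e_fold g_inst_constr) [list_encode (map prod_encode l), enc_fm c, 0] = enc_fm (inst_constr l c)"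
    unfolding inst_constr_def by (rule fold_mirror) (auto simp: g_inst_constr_def)
  then show ?thesis by (simp add: e_inst_constr_def encl_def)
qed

definition e_ground_rule :: ex where
  "e_ground_rule = App e_pair [App e_ratom_subst [App e_fst [Var 0], Var 1],
     App e_pair [App e_inst_constr [Var 1, App e_fst [App e_snd [Var 0]]],
                 App (e_map e_lit_subst) [App e_snd [App e_snd [Var 0]], Var 1]]]"
lemma wf_ground_rule[simp]: "wfe (Suc (Suc 0)) e_ground_rule" by (simp add: e_ground_rule_def)
lemma ev_ground_rule[simp]: "eval e_ground_rule [enc_rule r, encl l] = enc_rule (ground_rule r l)"
  by (cases r) (simp add: e_ground_rule_def ground_rule_def comp_def)

definition g_ground_rule_one :: ex where "g_ground_rule_one = App e_cons [App e_ground_rule [Var 2, Var 0], Var 1]"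
lemma wf_g_ground_rule_one[simp]: "wfe (Suc (Suc (Suc 0))) g_ground_rule_one" by (simp add: g_ground_rule_one_def)
definition g_ground_rule_all :: "nat list \<Rightarrow> ex" where
  "g_ground_rule_all Fl = App (e_fold g_ground_rule_one) [App (e_assignments Fl) [S (Var 0)], Var 1, Var 0]"
lemma wf_g_ground_rule_all[simp]: "wfe (Suc (Suc (Suc 0))) (g_ground_rule_all Fl)" by (simp add: g_ground_rule_all_def)
definition e_ground_prog :: "nat list \<Rightarrow> ex" where "e_ground_prog Fl = App (e_fold (g_ground_rule_all Fl)) [Var 0, Z, Z]"
lemma wf_ground_prog[simp]: "wfe (Suc 0) (e_ground_prog Fl)" by (simp add: e_ground_prog_def)

lemma ev_ground_prog[simp]: "eval (e_ground_prog Fl) [list_encode (map enc_rule P)] = list_encode (map enc_rule (ground_prog Fl P))"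
proof -
  have inner: "eval (e_fold g_ground_rule_one) [list_encode (map encl L), list_encode (map enc_rule acc), enc_rule r]
     = list_encode (map enc_rule (foldl (\<lambda>acc l. ground_rule r l # acc) acc L))" for L acc r
    by (rule fold_mirror) (simp add: g_ground_rule_one_def)
  have "eval (e_fold (g_ground_rule_all Fl)) [list_encode (map enc_rule P), list_encode (map enc_rule []), 0]
     = list_encode (map enc_rule (ground_prog Fl P))"
    unfolding ground_prog_def
  proof (rule fold_mirror)
    fix x acc assume "x \<in> set P"
    show "eval (g_ground_rule_all Fl) [enc_rule x, list_encode (map enc_rule acc), 0] =
      list_encode (map enc_rule (foldl (\<lambda>acc l. ground_rule x l # acc) acc (assignments Fl (Suc (enc_rule x)))))"
      using inner[of "assignments Fl (Suc (enc_rule x))" acc x] by (simp add: g_ground_rule_all_def encL_def)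
  qed
  then show ?thesis by (simp add: e_ground_prog_def)
qed

definition g_atoms_lit :: ex where "g_atoms_lit = App e_cons [App e_snd [Var 0], Var 1]"
lemma wf_g_atoms_lit[simp]: "wfe (Suc (Suc (Suc 0))) g_atoms_lit" by (simp add: g_atoms_lit_def)
definition g_atoms_rule :: ex where
  "g_atoms_rule = App (e_fold g_atoms_lit) [App e_snd [App e_snd [Var 0]], App e_cons [App e_fst [Var 0], Var 1], Z]"
lemma wf_g_atoms_rule[simp]: "wfe (Suc (Suc (Suc 0))) g_atoms_rule" by (simp add: g_atoms_rule_def)
definition e_atom_list :: ex where "e_atom_list = App (e_fold g_atoms_rule) [Var 1, App e_cons [Var 0, Z], Z]"
lemma wf_atom_list[simp]: "wfe (Suc (Suc 0)) e_atom_list" by (simp add: e_atom_list_def)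

lemma ev_atom_list[simp]: "eval e_atom_list [enc_ratom A, list_encode (map enc_rule G)] = list_encode (map enc_ratom (atom_list A G))"
proof -
  have inner: "eval (e_fold g_atoms_lit) [list_encode (map enc_lit b), list_encode (map enc_ratom acc), 0]
     = list_encode (map enc_ratom (foldl (\<lambda>acc l. lit_atom l # acc) acc b))" for b acc
    by (rule fold_mirror) (case_tac x, simp_all add: g_atoms_lit_def)
  have "eval (e_fold g_atoms_rule) [list_encode (map enc_rule G), list_encode (map enc_ratom [A]), 0]
     = list_encode (map enc_ratom (atom_list A G))"
    unfolding atom_list_def
  proof (rule fold_mirror)
    fix x acc assume "x \<in> set G"
    obtain h c b where x: "x = (h, c, b)" by (cases x) auto
    have "eval g_atoms_rule [enc_rule x, list_encode (map enc_ratom acc), 0] =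
      eval (e_fold g_atoms_lit) [list_encode (map enc_lit b), list_encode (map enc_ratom (h # acc)), 0]"
      by (simp add: g_atoms_rule_def x del: ev_fold)
    then show "eval g_atoms_rule [enc_rule x, list_encode (map enc_ratom acc), 0] =
      list_encode (map enc_ratom (foldl (\<lambda>acc l. lit_atom l # acc) (fst x # acc) (snd (snd x))))"
      using inner[of b "h # acc"] by (simp add: x)
  qed
  then show ?thesis by (simp add: e_atom_list_def)
qed

declare list_encode_eq[simp]

lemma inj_enc_trm: "inj enc_trm"
proof (rule injI)
  fix s t assume "enc_trm s = enc_trm t" then show "s = t" by (cases s; cases t) auto
qed

lemma enc_ratom_eq[simp]: "enc_ratom a = enc_ratom b \<longleftrightarrow> a = b"
  using inj_enc_trm by (cases a; cases b) auto

lemma enc_lit_eq[simp]: "enc_lit a = enc_lit b \<longleftrightarrow> a = b"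
  by (cases a; cases b) auto

lemma inj_enc_lit: "inj enc_lit" by (rule injI) simp

lemma enc_fm_eq[simp]: "enc_fm f = enc_fm g \<longleftrightarrow> f = g"
proof (induction f arbitrary: g)
  case Tru then show ?case by (cases g) auto
next
  case (Eq s t) then show ?case using inj_enc_trm by (cases g) (auto dest: injD)
next
  case (Atm p ts) then show ?case using inj_enc_trm by (cases g) auto
next
  case (Neg f) then show ?case by (cases g) auto
next
  case (Conj f1 f2) then show ?case by (cases g) auto
next
  case (Disj f1 f2) then show ?case by (cases g) auto
next
  case (Ex x f) then show ?case by (cases g) auto
qed

lemma inj_enc_rule: "inj enc_rule"
proof (rule injI)
  fix r s assume "enc_rule r = enc_rule s" then show "r = s"
    using inj_enc_lit by (cases r; cases s) auto
qed

lemma enc_input_eq: "enc_input P A = enc_input P' A' \<longleftrightarrow> P = P' \<and> A = A'"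
  using inj_enc_rule by (auto simp: enc_input_def)

definition table :: "(ratom \<Rightarrow> fm) \<Rightarrow> ratom list \<Rightarrow> nat" where
  "table f Rl = list_encode (map prod_encode (map (\<lambda>a. (enc_ratom a, enc_fm (f a))) Rl))"

lemma ev_lookup_table[simp]: "a \<in> set Rl \<Longrightarrow> eval e_lookup [table f Rl, enc_ratom a] = enc_fm (f a)"
  unfolding table_def ev_lookup by (rule alookup_eq) (auto simp: image_image)

definition e_table :: "ex \<Rightarrow> ex" where "e_table g = e_mapr (App e_pair [Var 0, App g [Var 0, Var 1]])"
lemma wf_table[simp]: "wfe (Suc (Suc 0)) g \<Longrightarrow> wfe (Suc (Suc 0)) (e_table g)" by (simp add: e_table_def)
lemma ev_table: "(\<And>a. a \<in> set Rl \<Longrightarrow> eval g [enc_ratom a, p] = enc_fm (f a)) \<Longrightarrow>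
   eval (e_table g) [list_encode (map enc_ratom Rl), p] = table f (rev Rl)"
  by (simp add: e_table_def table_def rev_map)

definition g_conj_body :: ex where
  "g_conj_body = App e_pair [e_num 4, App e_pair [App e_ifz [App e_fst [Var 0],
      App e_lookup [App e_fst [Var 2], App e_snd [Var 0]],
      App e_lookup [App e_snd [Var 2], App e_snd [Var 0]]], Var 1]]"
lemma wf_g_conj_body[simp]: "wfe (Suc (Suc (Suc 0))) g_conj_body" by (simp add: g_conj_body_def)
definition e_conj_body :: ex where "e_conj_body = App (e_fold g_conj_body) [Var 0, e_num (enc_fm Tru), Var 1]"
lemma wf_conj_body[simp]: "wfe (Suc (Suc 0)) e_conj_body" by (simp add: e_conj_body_def)
lemma ev_conj_body[simp]: "(\<And>l. l \<in> set b \<Longrightarrow> lit_atom l \<in> set Rl) \<Longrightarrow>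
  eval e_conj_body [list_encode (map enc_lit b), prod_encode (table d Rl, table nv Rl)] = enc_fm (conj_body (lit_formula d nv) b)"
proof -
  assume as: "\<And>l. l \<in> set b \<Longrightarrow> lit_atom l \<in> set Rl"
  have "eval (e_fold g_conj_body) [list_encode (map enc_lit b), enc_fm Tru, prod_encode (table d Rl, table nv Rl)] = enc_fm (conj_body (lit_formula d nv) b)"
    unfolding conj_body_def
  proof (rule fold_mirror)
    fix x acc assume "x \<in> set b"
    with as have "lit_atom x \<in> set Rl" by auto
    then show "eval g_conj_body [enc_lit x, enc_fm acc, prod_encode (table d Rl, table nv Rl)] = enc_fm (Conj (lit_formula d nv x) acc)"
      by (cases x) (simp_all add: g_conj_body_def lit_formula_def)
  qed
  then show ?thesis by (simp add: e_conj_body_def del: ev_fold)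
qed

definition g_tp_formula :: ex where
  "g_tp_formula = App e_ifz [App e_eq [App e_fst [Var 0], App e_fst [Var 2]],
     App e_pair [e_num 5, App e_pair [App e_pair [e_num 4, App e_pair [App e_fst [App e_snd [Var 0]],
        App e_conj_body [App e_snd [App e_snd [Var 0]], App e_snd [Var 2]]]], Var 1]], Var 1]"
lemma wf_g_tp_formula[simp]: "wfe (Suc (Suc (Suc 0))) g_tp_formula" by (simp add: g_tp_formula_def)
definition e_tp_formula :: ex where
  "e_tp_formula = App (e_fold g_tp_formula) [App e_fst [Var 1], e_num (enc_fm Fls), App e_pair [Var 0, App e_snd [Var 1]]]"
lemma wf_tp_formula[simp]: "wfe (Suc (Suc 0)) e_tp_formula" by (simp add: e_tp_formula_def)

definition body_atoms_in :: "hprog \<Rightarrow> ratom list \<Rightarrow> bool" where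
  "body_atoms_in G Rl \<longleftrightarrow> (\<forall>r\<in>set G. \<forall>l\<in>set (snd (snd r)). lit_atom l \<in> set Rl)"

lemma ev_tp_formula[simp]: "body_atoms_in G Rl \<Longrightarrow>
  eval e_tp_formula [enc_ratom a, prod_encode (list_encode (map enc_rule G), prod_encode (table d Rl, table nv Rl))]
  = enc_fm (tp_formula G nv d a)"
proof -
  assume ok: "body_atoms_in G Rl"
  have "eval (e_fold g_tp_formula) [list_encode (map enc_rule G), enc_fm Fls, prod_encode (enc_ratom a, prod_encode (table d Rl, table nv Rl))]
     = enc_fm (tp_formula G nv d a)"
    unfolding tp_formula_def
  proof (rule fold_mirror)
    fix x acc assume x: "x \<in> set G"
    obtain h c b where xe: "x = (h, c, b)" by (cases x) auto
    from ok x xe have "\<And>l. l \<in> set b \<Longrightarrow> lit_atom l \<in> set Rl" by (auto simp: body_atoms_in_def)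
    then show "eval g_tp_formula [enc_rule x, enc_fm acc, prod_encode (enc_ratom a, prod_encode (table d Rl, table nv Rl))] =
      enc_fm (if fst x = a then Disj (Conj (fst (snd x)) (conj_body (lit_formula d nv) (snd (snd x)))) acc else acc)"
      by (simp add: g_tp_formula_def xe)
  qed
  then show ?thesis by (simp add: e_tp_formula_def del: ev_fold)
qed

text \<open>The code of false, kept as a constant so that it is not unfolded.\<close>
definition code_Fls :: nat where "code_Fls = enc_fm Fls"

definition g_tp_iter :: ex where
  "g_tp_iter = App (e_table e_tp_formula) [App e_fst [Var 1],
     App e_pair [App e_fst [App e_snd [Var 1]], App e_pair [Var 0, App e_snd [App e_snd [Var 1]]]]]"
lemma wf_g_tp_iter[simp]: "wfe (Suc (Suc 0)) g_tp_iter" by (simp add: g_tp_iter_def)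

definition e_tp_iter :: ex where
  "e_tp_iter = App (e_iter g_tp_iter) [Var 0, App (e_table (e_num code_Fls)) [Var 1, Z],
     App e_pair [Var 1, App e_pair [Var 2, Var 3]]]"
lemma wf_tp_iter[simp]: "wfe (Suc (Suc (Suc (Suc 0)))) e_tp_iter" by (simp add: e_tp_iter_def)

lemma ev_false_table: "eval (e_table (e_num code_Fls)) [list_encode (map enc_ratom R), 0] = table (\<lambda>_. Fls) (rev R)"
  by (rule ev_table) (simp add: code_Fls_def)

lemma ev_tp_iter[simp]: "body_atoms_in G R \<Longrightarrow>
  eval e_tp_iter [k, list_encode (map enc_ratom R), list_encode (map enc_rule G), table nv (rev R)]
   = table (tp_iter_formula G nv k) (rev R)"
proof -
  assume ok: "body_atoms_in G R"
  then have ok': "body_atoms_in G (rev R)" by (simp add: body_atoms_in_def)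
  let ?p = "prod_encode (list_encode (map enc_ratom R), prod_encode (list_encode (map enc_rule G), table nv (rev R)))"
  have step: "eval g_tp_iter [table d (rev R), ?p] = table (tp_formula G nv d) (rev R)" for d
    unfolding g_tp_iter_def using ok' by (simp add: ev_table)
  have "((\<lambda>v. eval g_tp_iter [v, ?p]) ^^ k) (table (\<lambda>_. Fls) (rev R)) = table (tp_iter_formula G nv k) (rev R)"
    by (induction k) (simp_all add: tp_iter_formula_def step)
  then show ?thesis by (simp add: e_tp_iter_def ev_false_table)
qed

definition g_neg :: ex where "g_neg = App e_pair [e_num 3, App e_lookup [Var 1, Var 0]]"
lemma wf_g_neg[simp]: "wfe (Suc (Suc 0)) g_neg" by (simp add: g_neg_def)
lemma ev_neg_table: "eval (e_table g_neg) [list_encode (map enc_ratom R), table f (rev R)] = table (\<lambda>a. Neg (f a)) (rev R)"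
  by (rule ev_table) (simp add: g_neg_def)

definition e_Psi :: ex where
  "e_Psi = App e_pair [
     App e_tp_iter [App e_fst [Var 1], App e_fst [App e_snd [Var 1]], App e_snd [App e_snd [Var 1]], App e_snd [Var 0]],
     App (e_table g_neg) [App e_fst [App e_snd [Var 1]],
        App e_tp_iter [App e_fst [Var 1], App e_fst [App e_snd [Var 1]], App e_snd [App e_snd [Var 1]],
           App (e_table g_neg) [App e_fst [App e_snd [Var 1]], App e_fst [Var 0]]]]]"
lemma wf_Psi[simp]: "wfe (Suc (Suc 0)) e_Psi" by (simp add: e_Psi_def)

lemma ev_Psi: "body_atoms_in G R \<Longrightarrow>
  eval e_Psi [prod_encode (table (fst s) (rev R), table (snd s) (rev R)),
     prod_encode (K, prod_encode (list_encode (map enc_ratom R), list_encode (map enc_rule G)))]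
  = prod_encode (table (fst (Psi_formula G K s)) (rev R), table (snd (Psi_formula G K s)) (rev R))"
  by (simp add: e_Psi_def Psi_formula_def ev_neg_table)

text \<open>The whole computation: from the code of (P, A), ground P, collect its atoms, iterate
  the symbolic Psi 2K + 2 times from the false interpretation (K the code of the ground
  program), select one component with sel and look up A.\<close>
definition e_wf_core :: "ex \<Rightarrow> ex" where
  "e_wf_core sel = App e_lookup [App sel [App (e_iter e_Psi)
      [App e_add [App e_add [Var 1, Var 1], e_num 2],
       App e_pair [App (e_table (e_num code_Fls)) [Var 2, Z], App (e_table (e_num code_Fls)) [Var 2, Z]],
       App e_pair [Var 1, App e_pair [Var 2, Var 1]]]], Var 0]"
lemma wf_wf_core[simp]: "wfe (Suc 0) sel \<Longrightarrow> wfe (Suc (Suc (Suc 0))) (e_wf_core sel)" by (simp add: e_wf_core_def)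

definition e_wf_formula :: "ex \<Rightarrow> nat list \<Rightarrow> ex" where
  "e_wf_formula sel Fl = App (e_wf_core sel) [App e_snd [Var 0], App (e_ground_prog Fl) [App e_fst [Var 0]],
      App e_atom_list [App e_snd [Var 0], App (e_ground_prog Fl) [App e_fst [Var 0]]]]"
lemma wf_wf_formula[simp]: "wfe (Suc 0) sel \<Longrightarrow> wfe (Suc 0) (e_wf_formula sel Fl)" by (simp add: e_wf_formula_def)

lemma set_atom_list: "set (atom_list A G) = insert A (fst ` set G \<union> (\<Union>r\<in>set G. lit_atom ` set (snd (snd r))))"
proof -
  have "set (foldl (\<lambda>acc r. foldl (\<lambda>acc l. lit_atom l # acc) (fst r # acc) (snd (snd r))) acc G)
     = set acc \<union> (fst ` set G \<union> (\<Union>r\<in>set G. lit_atom ` set (snd (snd r))))" for acc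
  proof (induction G arbitrary: acc)
    case Nil then show ?case by simp
  next
    case (Cons r G)
    have "set (foldl (\<lambda>acc l. lit_atom l # acc) acc' b) = set acc' \<union> lit_atom ` set b" for acc' b
      by (induction b arbitrary: acc') auto
    then show ?case using Cons by auto
  qed
  then show ?thesis by (simp add: atom_list_def)
qed

lemma body_atoms_in_atom_list: "body_atoms_in G (atom_list A G)"
  by (auto simp: body_atoms_in_def set_atom_list)

lemma ev_wf_formula:
  assumes sel: "\<And>a b. eval sel [prod_encode (a, b)] = selN (a, b)"
    and selH: "\<And>t f. selN (table t (rev (atom_list A (ground_prog Fl P))), table f (rev (atom_list A (ground_prog Fl P))))
        = table (selH (t, f)) (rev (atom_list A (ground_prog Fl P)))"
  shows "eval (e_wf_formula sel Fl) [enc_input P A] = enc_fm (selH (wf_formulas Fl P) A)"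
proof -
  let ?G = "ground_prog Fl P"
  let ?R = "atom_list A ?G"
  let ?K = "list_encode (map enc_rule ?G)"
  let ?p = "prod_encode (?K, prod_encode (list_encode (map enc_ratom ?R), ?K))"
  have ok: "body_atoms_in ?G ?R" by (rule body_atoms_in_atom_list)
  have it: "((\<lambda>v. eval e_Psi [v, ?p]) ^^ n) (prod_encode (table (\<lambda>_. Fls) (rev ?R), table (\<lambda>_. Fls) (rev ?R)))
     = prod_encode (table (fst ((Psi_formula ?G ?K ^^ n) (\<lambda>_. Fls, \<lambda>_. Fls))) (rev ?R),
                    table (snd ((Psi_formula ?G ?K ^^ n) (\<lambda>_. Fls, \<lambda>_. Fls))) (rev ?R))" for n
  proof (induction n)
    case 0 then show ?case by simp
  next
    case (Suc n) then show ?case using ev_Psi[OF ok] by simp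
  qed
  have A: "A \<in> set (rev ?R)" by (simp add: set_atom_list)
  let ?false = "prod_encode (table (\<lambda>_. Fls) (rev ?R), table (\<lambda>_. Fls) (rev ?R))"
  have "eval (e_wf_formula sel Fl) [enc_input P A]
      = eval e_lookup [eval sel [eval (e_iter e_Psi) [?K + ?K + 2, ?false, ?p]], enc_ratom A]"
    by (simp add: e_wf_formula_def e_wf_core_def enc_input_def ev_false_table del: ev_iter)
  also have "eval (e_iter e_Psi) [?K + ?K + 2, ?false, ?p]
      = prod_encode (table (fst (wf_formulas Fl P)) (rev ?R), table (snd (wf_formulas Fl P)) (rev ?R))"
    unfolding ev_iter it by (simp add: wf_formulas_def Let_def del: funpow.simps)
  also have "eval e_lookup [eval sel [prod_encode (table (fst (wf_formulas Fl P)) (rev ?R),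
      table (snd (wf_formulas Fl P)) (rev ?R))], enc_ratom A] = enc_fm (selH (wf_formulas Fl P) A)"
    using A by (simp add: sel selH)
  finally show ?thesis .
qed

lemma decide_literal:
  fixes D :: "'d itself"
  assumes entails_dec: "\<forall>n\<in>enc_fm ` closed_constraints F Constr. recf_eval dec [n]
       (if n \<in> enc_fm ` {c \<in> closed_constraints F Constr. entails D T c} then 1 else 0)"
    and wf: "wfe (Suc 0) e"
    and ev: "\<And>P A. (P, A) \<in> valid_inputs F Constr \<Longrightarrow> eval e [enc_input P A] = enc_fm (\<phi> P A)"
    and closed: "\<And>P A. (P, A) \<in> valid_inputs F Constr \<Longrightarrow> \<phi> P A \<in> closed_constraints F Constr"
    and sem: "\<And>P A (M :: 'd struct). (P, A) \<in> valid_inputs F Constr \<Longrightarrow>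
        holds M (\<phi> P A) \<longleftrightarrow> L A \<in> WF (herbrand_base F) (reduct F P M)"
  shows "decidable_on ((\<lambda>(P, A). enc_input P A) ` valid_inputs F Constr)
           ((\<lambda>(P, A). enc_input P A) ` {(P, A) \<in> valid_inputs F Constr. models_wf D F P T (L A)})"
proof -
  obtain r where r: "computes (Suc 0) r e" using compile[OF wf] by blast
  show ?thesis
    unfolding decidable_on_def
  proof (intro exI[of _ "Comp dec [r]"] ballI)
    fix n assume "n \<in> (\<lambda>(P, A). enc_input P A) ` valid_inputs F Constr"
    then obtain P A where n: "n = enc_input P A" and v: "(P, A) \<in> valid_inputs F Constr" by auto
    have "recf_eval r [n] (eval e [n])" using r by (simp add: computes_def)
    then have formula: "recf_eval r [n] (enc_fm (\<phi> P A))" using ev[OF v] n by simp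
    have "enc_fm (\<phi> P A) \<in> enc_fm ` {c \<in> closed_constraints F Constr. entails D T c}
        \<longleftrightarrow> entails D T (\<phi> P A)"
      using closed[OF v] by auto
    then have decision: "recf_eval dec [enc_fm (\<phi> P A)] (if entails D T (\<phi> P A) then 1 else 0)"
      using entails_dec closed[OF v] by force
    have "entails D T (\<phi> P A) \<longleftrightarrow> models_wf D F P T (L A)"
      using sem[OF v] by (simp add: entails_def models_wf_def true3_def)
    moreover have "n \<in> (\<lambda>(P, A). enc_input P A) ` {(P, A) \<in> valid_inputs F Constr. models_wf D F P T (L A)}
       \<longleftrightarrow> models_wf D F P T (L A)"
      using v unfolding n by (auto simp: enc_input_eq)
    ultimately show "recf_eval (Comp dec [r]) [n]
      (if n \<in> (\<lambda>(P, A). enc_input P A) ` {(P, A) \<in> valid_inputs F Constr. models_wf D F P T (L A)}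
       then 1 else 0)"
      by (intro recf_eval.comp[where ys = "[enc_fm (\<phi> P A)]"]) (use formula decision in auto)
  qed
qed

theorem mainTheorem1:
  fixes F :: "nat set" and Constr :: "fm set" and T :: "fm set" and D :: "'d itself"
  assumes F_fin: "finite F" and F_ne: "F \<noteq> {}"
    and T_lang: "\<forall>f\<in>T. fm_consts f \<subseteq> F"
    and T_distinct: "\<forall>c\<in>F. \<forall>d\<in>F. c \<noteq> d \<longrightarrow> Neg (Eq (C c) (C d)) \<in> T"
    and T_dca: "\<exists>x cs. set cs = F \<and> dca x cs \<in> T"
    and C_true: "Tru \<in> Constr"
    and C_eq: "\<forall>s t. Eq s t \<in> Constr"
    and C_neg: "\<forall>f\<in>Constr. Neg f \<in> Constr"
    and C_conj: "\<forall>f\<in>Constr. \<forall>g\<in>Constr. Conj f g \<in> Constr"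
    and C_disj: "\<forall>f\<in>Constr. \<forall>g\<in>Constr. Disj f g \<in> Constr"
    and C_ex: "\<forall>x. \<forall>f\<in>Constr. Ex x f \<in> Constr"
    and T_dec: "decidable_on (enc_fm ` closed_constraints F Constr)
                  (enc_fm ` {c \<in> closed_constraints F Constr. entails D T c})"
  shows "decidable_on ((\<lambda>(P, A). enc_input P A) ` valid_inputs F Constr)
           ((\<lambda>(P, A). enc_input P A) ` {(P, A) \<in> valid_inputs F Constr. models_wf D F P T (Pos A)})
       \<and> decidable_on ((\<lambda>(P, A). enc_input P A) ` valid_inputs F Constr)
           ((\<lambda>(P, A). enc_input P A) ` {(P, A) \<in> valid_inputs F Constr. models_wf D F P T (NegL A)})"
proof -
  have cs: "constraint_class Constr"
    using C_true C_eq C_neg C_conj C_disj C_ex by unfold_locales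
  define Fl where "Fl = sorted_list_of_set F"
  have Fl: "set Fl = F" "Fl \<noteq> []" using F_fin F_ne by (auto simp: Fl_def)
  from T_dec obtain dec where dec: "\<forall>n\<in>enc_fm ` closed_constraints F Constr. recf_eval dec [n]
       (if n \<in> enc_fm ` {c \<in> closed_constraints F Constr. entails D T c} then 1 else 0)"
    unfolding decidable_on_def by blast
  have valid: "hybrid_program F Constr P" "ground_ratom F A" if "(P, A) \<in> valid_inputs F Constr" for P A
    using that by (auto simp: valid_inputs_def)
  note correct = wf_formulas_correct[OF cs valid(1) Fl valid(2)]
  show ?thesis
  proof
    show "decidable_on ((\<lambda>(P, A). enc_input P A) ` valid_inputs F Constr)
           ((\<lambda>(P, A). enc_input P A) ` {(P, A) \<in> valid_inputs F Constr. models_wf D F P T (Pos A)})"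
      by (rule decide_literal[OF dec, where e = "e_wf_formula e_fst Fl"
            and \<phi> = "\<lambda>P A. fst (wf_formulas Fl P) A"])
        (simp_all add: ev_wf_formula[where selN = fst and selH = fst] correct(1) holds_def correct(3))
    show "decidable_on ((\<lambda>(P, A). enc_input P A) ` valid_inputs F Constr)
           ((\<lambda>(P, A). enc_input P A) ` {(P, A) \<in> valid_inputs F Constr. models_wf D F P T (NegL A)})"
      by (rule decide_literal[OF dec, where e = "e_wf_formula e_snd Fl"
            and \<phi> = "\<lambda>P A. snd (wf_formulas Fl P) A"])
        (simp_all add: ev_wf_formula[where selN = snd and selH = snd] correct(2) holds_def correct(4))
  qed
qed
end
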